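(* Let $\tfrac12<\alpha\le\tfrac32$, $T_{\rm p}=\tfrac{2\alpha-1}{4}\log m$, let $\beta>0,\delta'>0$ be fixed small constants, $\alpha_2=(2\alpha-1)\delta'$, $T_{\rm d}=\inf\{t\ge T_{\rm p}: K(t)\le0 \text{ or } K'(t)\le0\text{ or } 1-K(t)\le\beta\}$ and $T_2=\inf\{t\ge0: q_{\max}(t)\ge m^{-(\frac12-\alpha_2)}\}$. Then for every $\delta\in(0,1)$ there exist $M,C$ (independent of $m$) such that for all $m\ge M$, with probability at least $1-\delta$ over the initialization, for all $T_{\rm p}\le t\le\min\{T_{\rm d},T_2,\tfrac{2\alpha-1}{2-\delta'}\log m\}$ and all $i\in\{2,\dots,d\}$, $$\Big(\sum_{k=1}^m (w_k^i(t))^2\Big)^{1/2}\le C\max\Big\{\frac{1}{m^{\frac{2\alpha-1}{2}}},\ \frac{\log m}{m^{1-5\alpha_2}}\Big\}.$$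
   Context: Fix integers $d\ge2$, $m\ge2$. Network $f_\theta(x)=\sum_{k=1}^m a_k\sigma(w_k^{T}x)$ with $\theta=(a_k,w_k)_{k=1}^m$, $w_k=(w_k^1,\dots,w_k^d)^T$; risk $R(\theta)=\tfrac12\int(f_\theta-f)^2\rho\,dx$, where $\rho$ is a compactly supported probability density on $\mathbb R^d$ with $\int x_i^2\rho=1$, $\int x_ix_j\rho=0$ ($i\neq j$); $f$ is bounded on $\mathrm{supp}\,\rho$ with $\int f(x)x\rho(x)dx=(1,0,\dots,0)^T$; $\sigma$ is three times differentiable with $\sigma(0)=0,\sigma'(0)=1,\sigma''(0)=0$, $|\sigma'''|\le C_{\rm L}$. Initialization: independent $a_k(0)\sim N(0,m^{-2\alpha})$, $w_k(0)\sim N(0,m^{-2\alpha}I_d)$; $\theta(t)$ solves $\dot\theta=-\nabla R(\theta)$. $q_{\max}(t)=\max_{k,i}\{|a_k(t)|,|w_k^i(t)|\}$, $K(t)=\sum_k a_k(t)w_k^1(t)$, $K'(t)=\sum_k(a_k(t)^2+w_k^1(t)^2)$. $\log$ is natural. $M$ may depend on $\beta,\delta',\delta$. *)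

theory Defs
  imports "HOL-Probability.Probability"
begin

text \<open>Input space R^d: functions nat => real, coordinates 1..d, with Lebesgue product measure.\<close>
definition xspace :: "nat \<Rightarrow> (nat \<Rightarrow> real) measure" where
  "xspace d = PiM {1..d} (\<lambda>_. lborel)"

text \<open>Parameters theta :: nat \<times> nat => real; theta (k,0) = a_k, theta (k,i) = w_k^i (1 \<le> i \<le> d), k < m.\<close>
definition param_idx :: "nat \<Rightarrow> nat \<Rightarrow> (nat \<times> nat) set" where
  "param_idx d m = {..<m} \<times> {0..d}"

definition net :: "nat \<Rightarrow> nat \<Rightarrow> (real \<Rightarrow> real) \<Rightarrow> (nat \<times> nat \<Rightarrow> real) \<Rightarrow> (nat \<Rightarrow> real) \<Rightarrow> real" where
  "net d m \<sigma> \<theta> x = (\<Sum>k<m. \<theta> (k,0) * \<sigma> (\<Sum>i=1..d. \<theta> (k,i) * x i))"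

definition risk :: "nat \<Rightarrow> nat \<Rightarrow> (real \<Rightarrow> real) \<Rightarrow> ((nat \<Rightarrow> real) \<Rightarrow> real) \<Rightarrow> ((nat \<Rightarrow> real) \<Rightarrow> real)
    \<Rightarrow> (nat \<times> nat \<Rightarrow> real) \<Rightarrow> real" where
  "risk d m \<sigma> \<rho> f \<theta> = 1/2 * (\<integral>x. (net d m \<sigma> \<theta> x - f x)^2 * \<rho> x \<partial>xspace d)"

definition gradR :: "nat \<Rightarrow> nat \<Rightarrow> (real \<Rightarrow> real) \<Rightarrow> ((nat \<Rightarrow> real) \<Rightarrow> real) \<Rightarrow> ((nat \<Rightarrow> real) \<Rightarrow> real)
    \<Rightarrow> (nat \<times> nat \<Rightarrow> real) \<Rightarrow> nat \<times> nat \<Rightarrow> real" where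
  "gradR d m \<sigma> \<rho> f \<theta> j = deriv (\<lambda>s. risk d m \<sigma> \<rho> f (\<theta>(j := s))) (\<theta> j)"

text \<open>Initialization: all m(d+1) parameters iid N(0, m^(-2 alpha)) (standard deviation m^(-alpha)).\<close>
definition init_measure :: "nat \<Rightarrow> nat \<Rightarrow> real \<Rightarrow> (nat \<times> nat \<Rightarrow> real) measure" where
  "init_measure d m \<alpha> = PiM (param_idx d m) (\<lambda>_. density lborel (normal_density 0 (real m powr (-\<alpha>))))"

definition qmax :: "nat \<Rightarrow> nat \<Rightarrow> (nat \<times> nat \<Rightarrow> real) \<Rightarrow> real" where
  "qmax d m \<theta> = Max ((\<lambda>j. \<bar>\<theta> j\<bar>) ` param_idx d m)"

definition Kfun :: "nat \<Rightarrow> (nat \<times> nat \<Rightarrow> real) \<Rightarrow> real" where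
  "Kfun m \<theta> = (\<Sum>k<m. \<theta> (k,0) * \<theta> (k,1))"

definition K'fun :: "nat \<Rightarrow> (nat \<times> nat \<Rightarrow> real) \<Rightarrow> real" where
  "K'fun m \<theta> = (\<Sum>k<m. \<theta> (k,0)^2 + \<theta> (k,1)^2)"

text \<open>inf {t \<ge> t0. P t} in the extended reals (inf of the empty set = +infinity).\<close>
definition first_time :: "(real \<Rightarrow> bool) \<Rightarrow> real \<Rightarrow> ereal" where
  "first_time P t0 = Inf (ereal ` {t. t0 \<le> t \<and> P t})"

end

theory Submission
  imports Defs
begin

(* Let S(t) = sum_k (w_k^i(t))^2 for a fixed coordinate i >= 2.  Along the gradient flow,
   S' = 2 * integral of (f - f_theta) * (sum_k a_k w_k^i sigma'(w_k.x)) * x_i * rho.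
   Replacing sigma by the identity and sigma' by 1, isotropy of rho and the orthogonality of f
   to x_i turn this into -2 v^2 with v = sum_k a_k w_k^i.  The true derivative differs by a
   linearization error X = O(m q^4) and a gate error Y = O(m q^5 sum_k |w_k^i|), where q bounds
   all weights; completing the square gives S' <= X^2/2 + 2|Y|.  Hence sqrt (S + (m q^4)^2)
   grows at most linearly, at rate O(m q^4 + m^(3/2) q^5).  Before T2 we have
   q <= m^(-(1/2 - alpha2)), so the rate is O(m^(5 alpha2 - 1)) and up to time 2 log m the
   growth is O(log m / m^(1 - 5 alpha2)).  At initialization sqrt (S(0)) = O(m^(1/2 - alpha))
   with probability 1 - delta, by Markov's inequality. *)

lemma sqrt_growth_bound:
  fixes S S' :: "real \<Rightarrow> real"
  assumes t: "0 < t" and \<eta>: "0 < \<eta>" and B: "0 \<le> B" and C: "0 \<le> C"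
    and nonneg: "\<And>s. 0 \<le> s \<Longrightarrow> s \<le> t \<Longrightarrow> 0 \<le> S s"
    and cont: "continuous_on {0..t} S"
    and deriv: "\<And>s. 0 < s \<Longrightarrow> s < t \<Longrightarrow> (S has_real_derivative S' s) (at s)"
    and growth: "\<And>s. 0 < s \<Longrightarrow> s < t \<Longrightarrow> S' s \<le> 2 * \<eta> * B + 2 * C * sqrt (S s)"
  shows "sqrt (S t) \<le> sqrt (S 0) + \<eta> + t * (B + C)"
proof -
  \<comment> \<open>\<open>\<eta>\<close> keeps \<open>sqrt (S + \<eta>\<^sup>2)\<close> differentiable and absorbs the constant part of the growth rate.\<close>
  define \<phi> where "\<phi> s = sqrt (S s + \<eta>\<^sup>2)" for s
  have \<phi>_ge: "\<eta> \<le> \<phi> s" "sqrt (S s) \<le> \<phi> s" if "0 \<le> s" "s \<le> t" for s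
    using nonneg[OF that] \<eta> unfolding \<phi>_def by (auto intro!: real_le_rsqrt real_sqrt_le_mono)
  have \<phi>_deriv: "(\<phi> has_real_derivative S' s / (2 * \<phi> s)) (at s)" if "0 < s" "s < t" for s
  proof -
    have "0 < S s + \<eta>\<^sup>2" using nonneg[of s] that \<eta> by (simp add: add_nonneg_pos)
    from DERIV_chain2[OF DERIV_real_sqrt[OF this] DERIV_add[OF deriv[OF that] DERIV_const]]
    show ?thesis unfolding \<phi>_def by (simp add: divide_simps mult.commute)
  qed
  have "continuous_on {0..t} \<phi>" unfolding \<phi>_def using cont by (intro continuous_intros)
  then obtain l z where z: "0 < z" "z < t" and l: "(\<phi> has_real_derivative l) (at z)"
    and mvt: "\<phi> t - \<phi> 0 = (t - 0) * l"
    using MVT[OF t] \<phi>_deriv real_differentiable_def by meson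
  have "\<eta> * B \<le> \<phi> z * B" "C * sqrt (S z) \<le> C * \<phi> z"
    using \<phi>_ge[of z] z B C by (auto intro: mult_left_mono mult_right_mono)
  then have "S' z \<le> 2 * \<phi> z * (B + C)"
    using growth[OF z] by (simp add: algebra_simps)
  then have "t * l \<le> t * (B + C)"
    using DERIV_unique[OF l \<phi>_deriv[OF z]] \<phi>_ge[of z] z \<eta>
    by (simp add: pos_divide_le_eq mult.commute mult_left_mono)
  have "sqrt (S t) \<le> \<phi> t" using \<phi>_ge[of t] t by simp
  also have "\<dots> \<le> \<phi> 0 + t * (B + C)"
    using mvt \<open>t * l \<le> t * (B + C)\<close> by simp
  also have "\<phi> 0 \<le> sqrt (S 0) + \<eta>"
    unfolding \<phi>_def using nonneg[of 0] t \<eta> sqrt_add_le_add_sqrt[of "S 0" "\<eta>\<^sup>2"] by simp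
  finally show ?thesis by simp
qed

lemma sum_abs_le_sqrt_card_mult:
  fixes a :: "nat \<Rightarrow> real"
  shows "(\<Sum>k<m. \<bar>a k\<bar>) \<le> sqrt m * sqrt (\<Sum>k<m. (a k)\<^sup>2)"
proof -
  have "(\<Sum>k<m. \<bar>a k\<bar> * \<bar>1\<bar>) \<le> L2_set a {..<m} * L2_set (\<lambda>_. 1) {..<m}"
    by (rule L2_set_mult_ineq)
  also have "L2_set (\<lambda>_. 1) {..<m} = sqrt m" by (simp add: L2_set_constant)
  finally show ?thesis by (simp add: L2_set_def mult.commute)
qed

lemma weight_scale_powers:
  fixes x e :: real
  assumes x: "1 \<le> x" and e: "0 \<le> e"
  defines "Q \<equiv> x powr (-(1/2 - e))"
  shows "1 \<le> x * Q\<^sup>2" "x * Q ^ 4 \<le> x powr (5 * e - 1)" "x * Q ^ 5 * sqrt x = x powr (5 * e - 1)"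
proof -
  have pow: "x * Q ^ n = x powr (1 + real n * (-(1/2 - e)))" for n
    unfolding Q_def using x by (simp add: powr_power powr_mult_base)
  show "1 \<le> x * Q\<^sup>2" unfolding pow using x e by (simp add: ge_one_powr_ge_zero)
  show "x * Q ^ 4 \<le> x powr (5 * e - 1)" unfolding pow using x e by (intro powr_mono) auto
  have "x * Q ^ 5 * sqrt x = x powr (1 + real 5 * (-(1/2 - e))) * x powr (1/2)"
    unfolding pow using x by (simp add: powr_half_sqrt)
  also have "\<dots> = x powr (1 + real 5 * (-(1/2 - e)) + 1/2)" by (rule powr_add[symmetric])
  also have "\<dots> = x powr (5 * e - 1)" by (simp add: algebra_simps)
  finally show "x * Q ^ 5 * sqrt x = x powr (5 * e - 1)" .
qed

lemma add_mult_le_add_mult_max: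
  fixes a b c1 c2 :: real
  assumes "0 \<le> c1" "0 \<le> c2"
  shows "c1 * a + c2 * b \<le> (c1 + c2) * max a b"
  using mult_left_mono[OF max.cobounded1[of a b], of c1] mult_left_mono[OF max.cobounded2[of b a], of c2]
    assms by (simp add: distrib_right)

lemma DERIV_quadratic_remainder:
  fixes F :: "real \<Rightarrow> real"
  assumes remainder: "\<And>s. \<bar>s - s0\<bar> \<le> 1 \<Longrightarrow> \<bar>F s - F s0 - (s - s0) * L\<bar> \<le> c * (s - s0)\<^sup>2"
  shows "(F has_real_derivative L) (at s0)"
proof -
  have "((\<lambda>s. (F s - F s0) / (s - s0) - L) \<longlongrightarrow> 0) (at s0)"
  proof (rule Lim_null_comparison)
    show "((\<lambda>s. \<bar>c\<bar> * \<bar>s - s0\<bar>) \<longlongrightarrow> 0) (at s0)"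
      by (rule tendsto_eq_intros refl)+ simp
    have "eventually (\<lambda>s. \<bar>s - s0\<bar> < 1 \<and> s \<noteq> s0) (at s0)"
      unfolding eventually_at by (rule exI[of _ 1]) (auto simp: dist_real_def)
    then show "eventually (\<lambda>s. norm ((F s - F s0) / (s - s0) - L) \<le> \<bar>c\<bar> * \<bar>s - s0\<bar>) (at s0)"
    proof eventually_elim
      case (elim s)
      define u where "u = \<bar>s - s0\<bar>"
      have u: "u \<noteq> 0" "(s - s0)\<^sup>2 = u * u" using elim by (auto simp: u_def power2_eq_square)
      have "(F s - F s0) / (s - s0) - L = (F s - F s0 - (s - s0) * L) / (s - s0)"
        using elim by (simp add: field_simps)
      also have "norm \<dots> \<le> c * (s - s0)\<^sup>2 / u"
        using remainder[of s] elim by (simp add: u_def abs_divide divide_right_mono)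
      also have "\<dots> = c * u" using u by (simp add: field_simps)
      also have "\<dots> \<le> \<bar>c\<bar> * u" by (rule mult_right_mono) (auto simp: u_def)
      finally show ?case unfolding u_def .
    qed
  qed
  then show ?thesis by (simp add: has_field_derivative_iff LIM_zero_iff)
qed

lemma DERIV_integral_quadratic_remainder:
  fixes g :: "real \<Rightarrow> 'a \<Rightarrow> real"
  assumes w: "integrable M w" and g: "\<And>s. integrable M (g s)" and D: "integrable M D"
    and remainder: "\<And>s x. x \<in> space M \<Longrightarrow> \<bar>s - s0\<bar> \<le> 1 \<Longrightarrow>
      \<bar>g s x - g s0 x - (s - s0) * D x\<bar> \<le> K * (s - s0)\<^sup>2 * w x"
  shows "((\<lambda>s. \<integral>x. g s x \<partial>M) has_real_derivative (\<integral>x. D x \<partial>M)) (at s0)"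
proof (rule DERIV_quadratic_remainder)
  fix s :: real assume s: "\<bar>s - s0\<bar> \<le> 1"
  have "(\<integral>x. g s x \<partial>M) - (\<integral>x. g s0 x \<partial>M) - (s - s0) * (\<integral>x. D x \<partial>M)
      = (\<integral>x. g s x - g s0 x - (s - s0) * D x \<partial>M)"
    using g D by simp
  also have "\<bar>\<dots>\<bar> \<le> (\<integral>x. \<bar>g s x - g s0 x - (s - s0) * D x\<bar> \<partial>M)"
    using integral_norm_bound[of M "\<lambda>x. g s x - g s0 x - (s - s0) * D x"] by simp
  also have "\<dots> \<le> (\<integral>x. K * (s - s0)\<^sup>2 * w x \<partial>M)"
    by (rule integral_mono) (use g D w remainder s in auto)
  also have "\<dots> = K * (\<integral>x. w x \<partial>M) * (s - s0)\<^sup>2" by simp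
  finally show "\<bar>(\<integral>x. g s x \<partial>M) - (\<integral>x. g s0 x \<partial>M) - (s - s0) * (\<integral>x. D x \<partial>M)\<bar>
      \<le> K * (\<integral>x. w x \<partial>M) * (s - s0)\<^sup>2" .
qed

section \<open>Gaussian initialization\<close>

lemma init_measure_second_moment:
  assumes j: "j \<in> param_idx d m"
  shows "integrable (init_measure d m \<alpha>) (\<lambda>\<theta>. (\<theta> j)\<^sup>2)"
    and "(\<integral>\<theta>. (\<theta> j)\<^sup>2 \<partial>init_measure d m \<alpha>) = (real m powr (-\<alpha>))\<^sup>2"
proof -
  define s where "s = real m powr (-\<alpha>)"
  define N where "N = density lborel (normal_density 0 s)"
  have "0 < m" using j unfolding param_idx_def by auto
  then have s: "0 < s" unfolding s_def by simp
  have init: "init_measure d m \<alpha> = PiM (param_idx d m) (\<lambda>_. N)"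
    unfolding init_measure_def N_def s_def ..
  have distr_j: "distr (init_measure d m \<alpha>) N (\<lambda>\<theta>. \<theta> j) = N"
    unfolding init using prob_space_normal_density[OF s] j
    by (intro distr_PiM_component) (auto simp: N_def)
  have meas_j: "(\<lambda>\<theta>. \<theta> j) \<in> measurable (init_measure d m \<alpha>) N"
    unfolding init using j by (rule measurable_component_singleton)
  have sq[measurable]: "(\<lambda>x::real. x\<^sup>2) \<in> borel_measurable N" unfolding N_def by simp
  have "integrable lborel (\<lambda>x. normal_density 0 s x * (x - 0)\<^sup>2)"
    using s by (rule integrable_normal_moment)
  then have int_N: "integrable N (\<lambda>x. x\<^sup>2)" unfolding N_def by (subst integrable_density) auto
  have "(\<integral>x. x\<^sup>2 \<partial>N) = (\<integral>x. normal_density 0 s x * (x - 0) ^ (2 * 1) \<partial>lborel)"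
    unfolding N_def by (subst integral_density) auto
  also have "\<dots> = s\<^sup>2"
    using s by (subst integral_normal_moment_even) (simp_all add: fact_numeral)
  finally have var_N: "(\<integral>x. x\<^sup>2 \<partial>N) = s\<^sup>2" .
  show "integrable (init_measure d m \<alpha>) (\<lambda>\<theta>. (\<theta> j)\<^sup>2)"
    using int_N integrable_distr_eq[OF meas_j sq] distr_j by simp
  show "(\<integral>\<theta>. (\<theta> j)\<^sup>2 \<partial>init_measure d m \<alpha>) = (real m powr (-\<alpha>))\<^sup>2"
    using var_N integral_distr[OF meas_j sq] distr_j s_def by simp
qed

definition offdiag_mass :: "nat \<Rightarrow> nat \<Rightarrow> (nat \<times> nat \<Rightarrow> real) \<Rightarrow> real" where
  "offdiag_mass d m \<theta> = (\<Sum>i\<in>{2..d}. \<Sum>k<m. (\<theta> (k,i))\<^sup>2)"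

lemma
  shows integrable_offdiag_mass: "integrable (init_measure d m \<alpha>) (offdiag_mass d m)"
    and integral_offdiag_mass:
      "(\<integral>\<theta>. offdiag_mass d m \<theta> \<partial>init_measure d m \<alpha>) = real (d - 1) * real m * (real m powr (-\<alpha>))\<^sup>2"
proof -
  let ?P = "init_measure d m \<alpha>"
  have idx: "(k,i) \<in> param_idx d m" if "k < m" "i \<in> {2..d}" for k i
    using that unfolding param_idx_def by auto
  have int_sq: "integrable ?P (\<lambda>\<theta>. (\<theta> (k,i))\<^sup>2)" if "k < m" "i \<in> {2..d}" for k i
    using init_measure_second_moment(1) idx that by blast
  show "integrable ?P (offdiag_mass d m)"
    unfolding offdiag_mass_def using int_sq by (intro Bochner_Integration.integrable_sum) auto
  have "(\<integral>\<theta>. offdiag_mass d m \<theta> \<partial>?P) = (\<Sum>i\<in>{2..d}. \<integral>\<theta>. (\<Sum>k<m. (\<theta> (k,i))\<^sup>2) \<partial>?P)"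
    unfolding offdiag_mass_def using int_sq
    by (intro Bochner_Integration.integral_sum integrable_sum) auto
  also have "\<dots> = (\<Sum>i\<in>{2..d}. \<Sum>k<m. (\<integral>\<theta>. (\<theta> (k,i))\<^sup>2 \<partial>?P))"
    using int_sq by (intro sum.cong refl Bochner_Integration.integral_sum) auto
  also have "\<dots> = (\<Sum>i\<in>{2..d}. \<Sum>k<m. (real m powr (-\<alpha>))\<^sup>2)"
    by (intro sum.cong refl init_measure_second_moment(2) idx) auto
  finally show "(\<integral>\<theta>. offdiag_mass d m \<theta> \<partial>?P) = real (d - 1) * real m * (real m powr (-\<alpha>))\<^sup>2"
    by simp
qed

lemma init_offdiag_mass_bound:
  assumes m: "1 \<le> m" and d: "2 \<le> d" and \<delta>: "0 < \<delta>"
  shows "\<exists>A\<in>sets (init_measure d m \<alpha>). measure (init_measure d m \<alpha>) A \<ge> 1 - \<delta> \<and>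
     (\<forall>\<theta>\<in>A. \<forall>i\<in>{2..d}. (\<Sum>k<m. (\<theta> (k,i))\<^sup>2) \<le> real (d - 1) / \<delta> * (real m * (real m powr (-\<alpha>))\<^sup>2))"
proof -
  define P where "P = init_measure d m \<alpha>"
  define c where "c = real (d - 1) / \<delta> * (real m * (real m powr (-\<alpha>))\<^sup>2)"
  interpret P: prob_space P unfolding P_def init_measure_def
    using m prob_space_normal_density by (intro prob_space_PiM) auto
  have c: "0 < c" unfolding c_def using d m \<delta> by simp
  have int: "integrable P (offdiag_mass d m)" unfolding P_def by (rule integrable_offdiag_mass)
  then have [measurable]: "offdiag_mass d m \<in> borel_measurable P"
    by (rule borel_measurable_integrable)
  define A where "A = {\<theta>\<in>space P. offdiag_mass d m \<theta> < c}"
  have bad: "{\<theta>\<in>space P. c \<le> offdiag_mass d m \<theta>} \<in> sets P" by measurable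
  have "measure P {\<theta>\<in>space P. c \<le> offdiag_mass d m \<theta>} \<le> (\<integral>\<theta>. offdiag_mass d m \<theta> \<partial>P) / c"
    by (rule integral_Markov_inequality_measure[OF int bad])
      (auto simp: offdiag_mass_def c intro!: sum_nonneg)
  also have "\<dots> = \<delta>"
    unfolding P_def integral_offdiag_mass c_def using d m \<delta> by (simp add: field_simps)
  finally have "measure P {\<theta>\<in>space P. c \<le> offdiag_mass d m \<theta>} \<le> \<delta>" .
  moreover have "A = space P - {\<theta>\<in>space P. c \<le> offdiag_mass d m \<theta>}" unfolding A_def by auto
  ultimately have "measure P A \<ge> 1 - \<delta>" using P.prob_compl[OF bad] by simp
  moreover have "A \<in> sets P" unfolding A_def by measurable
  moreover have "(\<Sum>k<m. (\<theta> (k,i))\<^sup>2) \<le> c" if "\<theta> \<in> A" "i \<in> {2..d}" for \<theta> i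
  proof -
    have "(\<Sum>k<m. (\<theta> (k,i))\<^sup>2) \<le> offdiag_mass d m \<theta>"
      unfolding offdiag_mass_def using that(2)
      by (intro member_le_sum[of i "{2..d}" "\<lambda>i. \<Sum>k<m. (\<theta> (k,i))\<^sup>2"]) (auto intro!: sum_nonneg)
    then show ?thesis using that(1) unfolding A_def by simp
  qed
  ultimately show ?thesis unfolding P_def c_def by blast
qed

section \<open>The network and its activation\<close>

definition preact :: "nat \<Rightarrow> (nat \<times> nat \<Rightarrow> real) \<Rightarrow> nat \<Rightarrow> (nat \<Rightarrow> real) \<Rightarrow> real" where
  "preact d \<theta> k x = (\<Sum>j=1..d. \<theta> (k,j) * x j)"

lemma net_eq_preact: "net d m \<sigma> \<theta> x = (\<Sum>k<m. \<theta> (k,0) * \<sigma> (preact d \<theta> k x))"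
  unfolding net_def preact_def by simp

lemma preact_fun_upd:
  assumes "i \<in> {1..d}"
  shows "preact d (\<theta>((k,i) := s)) k x = preact d \<theta> k x + (s - \<theta> (k,i)) * x i"
proof -
  have "preact d (\<theta>((k,i) := s)) k x - preact d \<theta> k x
      = (\<Sum>j=1..d. if j = i then (s - \<theta> (k,i)) * x i else 0)"
    unfolding preact_def sum_subtractf[symmetric] by (rule sum.cong) (auto simp: algebra_simps)
  then show ?thesis using assms by simp
qed

lemma preact_fun_upd_other: "k' \<noteq> k \<Longrightarrow> preact d (\<theta>((k,i) := s)) k' x = preact d \<theta> k' x"
  unfolding preact_def by simp

lemma net_fun_upd:
  assumes "k < m" "i \<in> {1..d}"
  shows "net d m \<sigma> (\<theta>((k,i) := s)) x = net d m \<sigma> \<theta> x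
    + \<theta> (k,0) * (\<sigma> (preact d \<theta> k x + (s - \<theta> (k,i)) * x i) - \<sigma> (preact d \<theta> k x))"
proof -
  have "net d m \<sigma> (\<theta>((k,i) := s)) x - net d m \<sigma> \<theta> x = (\<Sum>k'<m. if k' = k
      then \<theta> (k,0) * (\<sigma> (preact d \<theta> k x + (s - \<theta> (k,i)) * x i) - \<sigma> (preact d \<theta> k x)) else 0)"
    unfolding net_eq_preact sum_subtractf[symmetric] using assms
    by (intro sum.cong) (auto simp: preact_fun_upd preact_fun_upd_other algebra_simps)
  then show ?thesis using assms by simp
qed

locale activation =
  fixes \<sigma> \<sigma>1 \<sigma>2 \<sigma>3 :: "real \<Rightarrow> real" and CL :: real
  assumes sig1: "\<And>z. (\<sigma> has_real_derivative \<sigma>1 z) (at z)"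
    and sig2: "\<And>z. (\<sigma>1 has_real_derivative \<sigma>2 z) (at z)"
    and sig3: "\<And>z. (\<sigma>2 has_real_derivative \<sigma>3 z) (at z)"
    and sig0: "\<sigma> 0 = 0" "\<sigma>1 0 = 1" "\<sigma>2 0 = 0"
    and sig3_bdd: "\<And>z. \<bar>\<sigma>3 z\<bar> \<le> CL"
begin

lemma CL_nonneg: "0 \<le> CL"
  using sig3_bdd[of 0] by linarith

lemma borel_measurable_sigma [measurable]: "\<sigma> \<in> borel_measurable borel"
  by (rule borel_measurable_continuous_onI)
    (meson DERIV_isCont continuous_at_imp_continuous_on sig1)

lemma borel_measurable_sigma1 [measurable]: "\<sigma>1 \<in> borel_measurable borel"
  by (rule borel_measurable_continuous_onI)
    (meson DERIV_isCont continuous_at_imp_continuous_on sig2)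

definition sigma_deriv :: "nat \<Rightarrow> real \<Rightarrow> real" where
  "sigma_deriv n = (if n = 0 then \<sigma> else if n = 1 then \<sigma>1 else if n = 2 then \<sigma>2 else \<sigma>3)"

lemma sigma_deriv_DERIV: "n < 3 \<Longrightarrow> (sigma_deriv n has_real_derivative sigma_deriv (Suc n) t) (at t)"
  by (cases n; cases "n - 1") (auto simp: sigma_deriv_def sig1 sig2 sig3 numeral_eq_Suc)

lemma sigma_taylor:
  assumes "0 < n" "n + k \<le> 3"
  obtains t where "\<bar>t - c\<bar> \<le> \<bar>x - c\<bar>"
    "sigma_deriv k x = (\<Sum>j<n. sigma_deriv (j + k) c / fact j * (x - c) ^ j)
       + sigma_deriv (n + k) t / fact n * (x - c) ^ n"
proof (cases "x = c")
  case True
  then show ?thesis using assms that[of c] by (simp add: sum.remove[of "{..<n}" 0] zero_power)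
next
  case False
  have "\<exists>t. (if x < c then x < t \<and> t < c else c < t \<and> t < x) \<and>
    sigma_deriv k x = (\<Sum>j<n. sigma_deriv (j + k) c / fact j * (x - c) ^ j)
       + sigma_deriv (n + k) t / fact n * (x - c) ^ n"
    by (rule Taylor[where a = "min x c" and b = "max x c"])
      (use assms False in \<open>auto intro!: sigma_deriv_DERIV\<close>)
  then obtain t where t: "if x < c then x < t \<and> t < c else c < t \<and> t < x"
    and "sigma_deriv k x = (\<Sum>j<n. sigma_deriv (j + k) c / fact j * (x - c) ^ j)
       + sigma_deriv (n + k) t / fact n * (x - c) ^ n"
    by blast
  moreover from t have "\<bar>t - c\<bar> \<le> \<bar>x - c\<bar>" by (auto split: if_splits)
  ultimately show ?thesis using that by blast
qed

lemma sigma_cubic_remainder: "\<bar>\<sigma> z - z\<bar> \<le> CL / 6 * \<bar>z\<bar> ^ 3"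
proof -
  obtain t where "sigma_deriv 0 z = (\<Sum>j<3. sigma_deriv (j + 0) 0 / fact j * (z - 0) ^ j)
      + sigma_deriv (3 + 0) t / fact 3 * (z - 0) ^ 3"
    using sigma_taylor[of 3 0 0 z] by auto
  then have E: "\<sigma> z - z = \<sigma>3 t / 6 * z ^ 3"
    by (simp add: sigma_deriv_def numeral_3_eq_3 lessThan_Suc sig0 fact_numeral)
  then have "\<bar>\<sigma> z - z\<bar> = \<bar>\<sigma>3 t\<bar> / 6 * \<bar>z\<bar> ^ 3" unfolding E by (simp add: abs_mult power_abs)
  also have "\<dots> \<le> CL / 6 * \<bar>z\<bar> ^ 3" by (intro mult_right_mono divide_right_mono sig3_bdd) auto
  finally show ?thesis .
qed

lemma sigma1_quadratic_remainder: "\<bar>\<sigma>1 z - 1\<bar> \<le> CL / 2 * z\<^sup>2"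
proof -
  obtain t where "sigma_deriv 1 z = (\<Sum>j<2. sigma_deriv (j + 1) 0 / fact j * (z - 0) ^ j)
      + sigma_deriv (2 + 1) t / fact 2 * (z - 0) ^ 2"
    using sigma_taylor[of 2 1 0 z] by auto
  then have E: "\<sigma>1 z - 1 = \<sigma>3 t / 2 * z\<^sup>2"
    by (simp add: sigma_deriv_def numeral_2_eq_2 lessThan_Suc sig0)
  then have "\<bar>\<sigma>1 z - 1\<bar> = \<bar>\<sigma>3 t\<bar> / 2 * z\<^sup>2" unfolding E by (simp add: abs_mult)
  also have "\<dots> \<le> CL / 2 * z\<^sup>2" by (intro mult_right_mono divide_right_mono sig3_bdd) auto
  finally show ?thesis .
qed

lemma abs_sigma2_le: "\<bar>\<sigma>2 z\<bar> \<le> CL * \<bar>z\<bar>"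
proof -
  obtain t where "sigma_deriv 2 z = (\<Sum>j<1. sigma_deriv (j + 2) 0 / fact j * (z - 0) ^ j)
      + sigma_deriv (1 + 2) t / fact 1 * (z - 0) ^ 1"
    using sigma_taylor[of 1 2 0 z] by auto
  then have "\<sigma>2 z = \<sigma>3 t * z" by (simp add: sigma_deriv_def sig0)
  then show ?thesis using sig3_bdd[of t] by (simp add: abs_mult mult_right_mono)
qed

lemma sigma_second_order_remainder:
  "\<bar>\<sigma> (z + e) - \<sigma> z - \<sigma>1 z * e\<bar> \<le> CL * (\<bar>z\<bar> + \<bar>e\<bar>) / 2 * e\<^sup>2"
proof -
  obtain t where t: "\<bar>t - z\<bar> \<le> \<bar>z + e - z\<bar>"
    and "sigma_deriv 0 (z + e) = (\<Sum>j<2. sigma_deriv (j + 0) z / fact j * (z + e - z) ^ j)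
      + sigma_deriv (2 + 0) t / fact 2 * (z + e - z) ^ 2"
    using sigma_taylor[of 2 0 z "z + e"] by auto
  then have E: "\<sigma> (z + e) - \<sigma> z - \<sigma>1 z * e = \<sigma>2 t / 2 * e\<^sup>2"
    by (simp add: sigma_deriv_def numeral_2_eq_2 lessThan_Suc)
  then have "\<bar>\<sigma> (z + e) - \<sigma> z - \<sigma>1 z * e\<bar> = \<bar>\<sigma>2 t\<bar> / 2 * e\<^sup>2" unfolding E by (simp add: abs_mult)
  also have "\<dots> \<le> CL * (\<bar>z\<bar> + \<bar>e\<bar>) / 2 * e\<^sup>2"
  proof -
    have "\<bar>t\<bar> \<le> \<bar>z\<bar> + \<bar>e\<bar>" using t by simp
    then have "\<bar>\<sigma>2 t\<bar> \<le> CL * (\<bar>z\<bar> + \<bar>e\<bar>)"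
      using abs_sigma2_le[of t] mult_left_mono[OF _ CL_nonneg] by (meson order_trans)
    then show ?thesis by (intro mult_right_mono divide_right_mono) auto
  qed
  finally show ?thesis .
qed

lemma abs_sigma_le:
  assumes "\<bar>z\<bar> \<le> Z"
  shows "\<bar>\<sigma> z\<bar> \<le> Z + CL / 6 * Z ^ 3"
proof -
  have "\<bar>z\<bar> ^ 3 \<le> Z ^ 3" using assms by (intro power_mono) auto
  then have "CL / 6 * \<bar>z\<bar> ^ 3 \<le> CL / 6 * Z ^ 3" using CL_nonneg by (intro mult_left_mono) auto
  then show ?thesis using sigma_cubic_remainder[of z] assms by linarith
qed

lemma abs_sigma1_le:
  assumes "\<bar>z\<bar> \<le> Z"
  shows "\<bar>\<sigma>1 z\<bar> \<le> 1 + CL / 2 * Z\<^sup>2"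
proof -
  have "z\<^sup>2 \<le> Z\<^sup>2" using power_mono[OF assms, of 2] by simp
  then have "CL / 2 * z\<^sup>2 \<le> CL / 2 * Z\<^sup>2" using CL_nonneg by (intro mult_left_mono) auto
  then show ?thesis using sigma1_quadratic_remainder[of z] by linarith
qed

lemma sigma_increment_remainder:
  assumes z: "\<bar>z\<bar> \<le> Z" and y: "\<bar>y\<bar> \<le> r" and \<epsilon>: "\<bar>\<epsilon>\<bar> \<le> 1"
  shows "\<bar>\<sigma> (z + \<epsilon> * y) - \<sigma> z - \<sigma>1 z * (\<epsilon> * y)\<bar> \<le> CL * (Z + r) / 2 * r\<^sup>2 * \<epsilon>\<^sup>2"
proof -
  have r: "0 \<le> r" using y by linarith
  have e: "\<bar>\<epsilon> * y\<bar> \<le> r * \<bar>\<epsilon>\<bar>"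
    unfolding abs_mult using mult_left_mono[OF y abs_ge_zero] by (simp add: mult.commute)
  then have "\<bar>\<epsilon> * y\<bar> \<le> r" "(\<epsilon> * y)\<^sup>2 \<le> r\<^sup>2 * \<epsilon>\<^sup>2"
    using mult_left_mono[OF \<epsilon> r] power_mono[OF e, of 2] by (auto simp: power_mult_distrib)
  then have "CL * (\<bar>z\<bar> + \<bar>\<epsilon> * y\<bar>) / 2 * (\<epsilon> * y)\<^sup>2 \<le> CL * (Z + r) / 2 * (r\<^sup>2 * \<epsilon>\<^sup>2)"
    using CL_nonneg z by (intro mult_mono divide_right_mono mult_left_mono add_mono) auto
  then show ?thesis
    using sigma_second_order_remainder[of z "\<epsilon> * y"] by (simp add: mult_ac)
qed

lemma abs_sigma_increment_le:
  assumes z: "\<bar>z\<bar> \<le> Z" and y: "\<bar>y\<bar> \<le> r" and \<epsilon>: "\<bar>\<epsilon>\<bar> \<le> 1"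
  shows "\<bar>\<sigma> (z + \<epsilon> * y) - \<sigma> z\<bar> \<le> ((1 + CL / 2 * Z\<^sup>2) * r + CL * (Z + r) / 2 * r\<^sup>2) * \<bar>\<epsilon>\<bar>"
proof -
  have "\<bar>\<epsilon>\<bar> * \<bar>\<epsilon>\<bar> \<le> 1 * \<bar>\<epsilon>\<bar>" using \<epsilon> by (intro mult_right_mono) auto
  then have "\<epsilon>\<^sup>2 \<le> \<bar>\<epsilon>\<bar>" by (simp add: power2_eq_square)
  moreover have "0 \<le> CL * (Z + r) / 2 * r\<^sup>2" using CL_nonneg z y by simp
  ultimately have "\<bar>\<sigma> (z + \<epsilon> * y) - \<sigma> z - \<sigma>1 z * (\<epsilon> * y)\<bar> \<le> CL * (Z + r) / 2 * r\<^sup>2 * \<bar>\<epsilon>\<bar>"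
    using sigma_increment_remainder[OF assms] by (meson mult_left_mono order_trans)
  moreover have "\<bar>\<epsilon> * y\<bar> \<le> r * \<bar>\<epsilon>\<bar>"
    unfolding abs_mult using mult_left_mono[OF y abs_ge_zero] by (simp add: mult.commute)
  then have "\<bar>\<sigma>1 z * (\<epsilon> * y)\<bar> \<le> (1 + CL / 2 * Z\<^sup>2) * (r * \<bar>\<epsilon>\<bar>)"
    unfolding abs_mult[of "\<sigma>1 z"] using abs_sigma1_le[OF z] by (intro mult_mono) auto
  moreover have "\<bar>\<sigma> (z + \<epsilon> * y) - \<sigma> z\<bar>
      \<le> \<bar>\<sigma> (z + \<epsilon> * y) - \<sigma> z - \<sigma>1 z * (\<epsilon> * y)\<bar> + \<bar>\<sigma>1 z * (\<epsilon> * y)\<bar>"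
    using abs_triangle_ineq[of "\<sigma> (z + \<epsilon> * y) - \<sigma> z - \<sigma>1 z * (\<epsilon> * y)" "\<sigma>1 z * (\<epsilon> * y)"] by simp
  moreover have "((1 + CL / 2 * Z\<^sup>2) * r + CL * (Z + r) / 2 * r\<^sup>2) * \<bar>\<epsilon>\<bar>
      = CL * (Z + r) / 2 * r\<^sup>2 * \<bar>\<epsilon>\<bar> + (1 + CL / 2 * Z\<^sup>2) * (r * \<bar>\<epsilon>\<bar>)"
    by (simp add: algebra_simps)
  ultimately show ?thesis by linarith
qed

lemma loss_increment_remainder:
  assumes z: "\<bar>z\<bar> \<le> Z" and h: "\<bar>h\<bar> \<le> H" and y: "\<bar>y\<bar> \<le> r" and \<epsilon>: "\<bar>\<epsilon>\<bar> \<le> 1"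
  shows "\<bar>(h + a * (\<sigma> (z + \<epsilon> * y) - \<sigma> z))\<^sup>2 - h\<^sup>2 - \<epsilon> * (2 * h * a * \<sigma>1 z * y)\<bar>
    \<le> (a\<^sup>2 * ((1 + CL / 2 * Z\<^sup>2) * r + CL * (Z + r) / 2 * r\<^sup>2)\<^sup>2
        + 2 * H * \<bar>a\<bar> * (CL * (Z + r) / 2 * r\<^sup>2)) * \<epsilon>\<^sup>2"
proof -
  define D where "D = \<sigma> (z + \<epsilon> * y) - \<sigma> z"
  define R where "R = D - \<sigma>1 z * (\<epsilon> * y)"
  define P where "P = (1 + CL / 2 * Z\<^sup>2) * r + CL * (Z + r) / 2 * r\<^sup>2"
  have "(h + a * D)\<^sup>2 - h\<^sup>2 - \<epsilon> * (2 * h * a * \<sigma>1 z * y) = a\<^sup>2 * D\<^sup>2 + 2 * h * a * R"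
    unfolding R_def by (simp add: algebra_simps power2_eq_square)
  also have "\<bar>\<dots>\<bar> \<le> a\<^sup>2 * D\<^sup>2 + 2 * \<bar>h\<bar> * \<bar>a\<bar> * \<bar>R\<bar>"
    using abs_triangle_ineq[of "a\<^sup>2 * D\<^sup>2" "2 * h * a * R"] by (simp add: abs_mult)
  also have "\<dots> \<le> a\<^sup>2 * (P\<^sup>2 * \<epsilon>\<^sup>2) + 2 * H * \<bar>a\<bar> * (CL * (Z + r) / 2 * r\<^sup>2 * \<epsilon>\<^sup>2)"
  proof -
    have "D\<^sup>2 \<le> P\<^sup>2 * \<epsilon>\<^sup>2"
      using power_mono[OF abs_sigma_increment_le[OF z y \<epsilon>], of 2]
      unfolding D_def P_def by (simp add: power_mult_distrib)
    then have "a\<^sup>2 * D\<^sup>2 \<le> a\<^sup>2 * (P\<^sup>2 * \<epsilon>\<^sup>2)" by (simp add: mult_left_mono)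
    moreover have hR: "\<bar>h\<bar> * \<bar>R\<bar> \<le> H * (CL * (Z + r) / 2 * r\<^sup>2 * \<epsilon>\<^sup>2)"
      using h sigma_increment_remainder[OF z y \<epsilon>] unfolding R_def D_def by (intro mult_mono) auto
    have "2 * \<bar>h\<bar> * \<bar>a\<bar> * \<bar>R\<bar> \<le> 2 * H * \<bar>a\<bar> * (CL * (Z + r) / 2 * r\<^sup>2 * \<epsilon>\<^sup>2)"
      using mult_left_mono[OF hR, of "2 * \<bar>a\<bar>"] by (simp add: mult_ac)
    ultimately show ?thesis by linarith
  qed
  also have "\<dots> = (a\<^sup>2 * P\<^sup>2 + 2 * H * \<bar>a\<bar> * (CL * (Z + r) / 2 * r\<^sup>2)) * \<epsilon>\<^sup>2"
    by (simp add: algebra_simps)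
  finally show ?thesis by (simp only: D_def P_def)
qed

lemma square_residual_fun_upd_remainder:
  assumes k: "k < m" and i: "i \<in> {1..d}"
    and Z: "\<bar>preact d \<theta> k x\<bar> \<le> Z" and H: "\<bar>net d m \<sigma> \<theta> x - y\<bar> \<le> H"
    and r: "\<bar>x i\<bar> \<le> r" and s: "\<bar>s - \<theta> (k,i)\<bar> \<le> 1"
  shows "\<bar>(net d m \<sigma> (\<theta>((k,i) := s)) x - y)\<^sup>2 - (net d m \<sigma> \<theta> x - y)\<^sup>2
      - (s - \<theta> (k,i)) * (2 * (net d m \<sigma> \<theta> x - y) * \<theta> (k,0) * \<sigma>1 (preact d \<theta> k x) * x i)\<bar>
    \<le> ((\<theta> (k,0))\<^sup>2 * ((1 + CL / 2 * Z\<^sup>2) * r + CL * (Z + r) / 2 * r\<^sup>2)\<^sup>2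
        + 2 * H * \<bar>\<theta> (k,0)\<bar> * (CL * (Z + r) / 2 * r\<^sup>2)) * (s - \<theta> (k,i))\<^sup>2"
proof -
  have upd: "net d m \<sigma> (\<theta>((k,i) := s)) x - y = (net d m \<sigma> \<theta> x - y)
      + \<theta> (k,0) * (\<sigma> (preact d \<theta> k x + (s - \<theta> (k,i)) * x i) - \<sigma> (preact d \<theta> k x))"
    using net_fun_upd[OF k i] by simp
  show ?thesis unfolding upd by (rule loss_increment_remainder[OF Z H r s])
qed

end

section \<open>Gradient of the risk\<close>

locale isotropic_data = activation +
  fixes d :: nat and \<rho> f :: "(nat \<Rightarrow> real) \<Rightarrow> real" and r B :: real
  assumes rho_meas [measurable]: "\<rho> \<in> borel_measurable (xspace d)"
    and rho_nonneg: "\<And>x. x \<in> space (xspace d) \<Longrightarrow> \<rho> x \<ge> 0"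
    and rho_prob: "(\<integral>x. \<rho> x \<partial>xspace d) = 1"
    and rho_second: "\<And>i. i \<in> {1..d} \<Longrightarrow> (\<integral>x. (x i)\<^sup>2 * \<rho> x \<partial>xspace d) = 1"
    and rho_cross: "\<And>i j. i \<in> {1..d} \<Longrightarrow> j \<in> {1..d} \<Longrightarrow> i \<noteq> j \<Longrightarrow>
      (\<integral>x. x i * x j * \<rho> x \<partial>xspace d) = 0"
    and f_meas [measurable]: "f \<in> borel_measurable (xspace d)"
    and f_corr: "\<And>i. i \<in> {2..d} \<Longrightarrow> (\<integral>x. f x * x i * \<rho> x \<partial>xspace d) = 0"
    and supp_radius: "1 \<le> r"
      "\<And>x j. x \<in> space (xspace d) \<Longrightarrow> \<rho> x \<noteq> 0 \<Longrightarrow> j \<in> {1..d} \<Longrightarrow> \<bar>x j\<bar> \<le> r"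
    and f_bound: "0 \<le> B" "\<And>x. x \<in> space (xspace d) \<Longrightarrow> \<rho> x \<noteq> 0 \<Longrightarrow> \<bar>f x\<bar> \<le> B"
begin

lemma borel_measurable_coord [measurable]:
  "i \<in> {1..d} \<Longrightarrow> (\<lambda>x. x i) \<in> borel_measurable (xspace d)"
  unfolding xspace_def using measurable_component_singleton[of i "{1..d}" "\<lambda>_. lborel"]
  by (simp add: measurable_lborel2)

lemma borel_measurable_preact [measurable]: "preact d \<theta> k \<in> borel_measurable (xspace d)"
  unfolding preact_def by measurable

lemma borel_measurable_net [measurable]: "net d m \<sigma> \<theta> \<in> borel_measurable (xspace d)"
  unfolding net_eq_preact by measurable

lemma borel_measurable_linear_net [measurable]: "net d m (\<lambda>z. z) \<theta> \<in> borel_measurable (xspace d)"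
  unfolding net_eq_preact by measurable

lemma integrable_rho: "integrable (xspace d) \<rho>"
  using rho_prob not_integrable_integral_eq by fastforce

definition bdd_on_supp :: "((nat \<Rightarrow> real) \<Rightarrow> real) \<Rightarrow> bool" where
  "bdd_on_supp h \<longleftrightarrow> (\<exists>C. \<forall>x\<in>space (xspace d). \<rho> x \<noteq> 0 \<longrightarrow> \<bar>h x\<bar> \<le> C)"

lemma integrable_bounded_times_rho:
  assumes [measurable]: "h \<in> borel_measurable (xspace d)"
    and bound: "\<And>x. x \<in> space (xspace d) \<Longrightarrow> \<rho> x \<noteq> 0 \<Longrightarrow> \<bar>h x\<bar> \<le> C"
  shows "integrable (xspace d) (\<lambda>x. h x * \<rho> x)"
proof (rule Bochner_Integration.integrable_bound)
  show "integrable (xspace d) (\<lambda>x. \<bar>C\<bar> * \<rho> x)" using integrable_rho by simp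
  show "AE x in xspace d. norm (h x * \<rho> x) \<le> norm (\<bar>C\<bar> * \<rho> x)"
    using bound rho_nonneg by (intro AE_I2) (fastforce simp: abs_mult intro: mult_right_mono)
qed measurable

lemma integrable_bdd_on_supp:
  "h \<in> borel_measurable (xspace d) \<Longrightarrow> bdd_on_supp h \<Longrightarrow> integrable (xspace d) (\<lambda>x. h x * \<rho> x)"
  unfolding bdd_on_supp_def using integrable_bounded_times_rho by blast

lemma abs_integral_times_rho_le:
  assumes [measurable]: "h \<in> borel_measurable (xspace d)"
    and bound: "\<And>x. x \<in> space (xspace d) \<Longrightarrow> \<rho> x \<noteq> 0 \<Longrightarrow> \<bar>h x\<bar> \<le> C"
  shows "\<bar>\<integral>x. h x * \<rho> x \<partial>xspace d\<bar> \<le> C"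
proof -
  have "\<bar>\<integral>x. h x * \<rho> x \<partial>xspace d\<bar> \<le> (\<integral>x. \<bar>h x * \<rho> x\<bar> \<partial>xspace d)"
    using integral_norm_bound[of "xspace d" "\<lambda>x. h x * \<rho> x"] by simp
  also have "\<dots> \<le> (\<integral>x. C * \<rho> x \<partial>xspace d)"
  proof (rule integral_mono)
    show "integrable (xspace d) (\<lambda>x. \<bar>h x * \<rho> x\<bar>)"
      using integrable_bounded_times_rho[OF assms] by simp
    show "\<bar>h x * \<rho> x\<bar> \<le> C * \<rho> x" if "x \<in> space (xspace d)" for x
      using bound[OF that] rho_nonneg[OF that]
      by (cases "\<rho> x = 0") (auto simp: abs_mult mult_right_mono)
  qed (use integrable_rho in simp)
  also have "\<dots> = C" using rho_prob by simp
  finally show ?thesis .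
qed

lemma bdd_on_supp_const: "bdd_on_supp (\<lambda>x. c)"
  unfolding bdd_on_supp_def by auto

lemma bdd_on_supp_coord: "i \<in> {1..d} \<Longrightarrow> bdd_on_supp (\<lambda>x. x i)"
  unfolding bdd_on_supp_def using supp_radius(2) by blast

lemma bdd_on_supp_f: "bdd_on_supp f"
  unfolding bdd_on_supp_def using f_bound(2) by blast

lemma bdd_on_supp_add: "bdd_on_supp g \<Longrightarrow> bdd_on_supp h \<Longrightarrow> bdd_on_supp (\<lambda>x. g x + h x)"
  unfolding bdd_on_supp_def by (metis (no_types, lifting) abs_triangle_ineq add_mono order_trans)

lemma bdd_on_supp_diff: "bdd_on_supp g \<Longrightarrow> bdd_on_supp h \<Longrightarrow> bdd_on_supp (\<lambda>x. g x - h x)"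
  unfolding bdd_on_supp_def by (metis (no_types, lifting) abs_triangle_ineq4 add_mono order_trans)

lemma bdd_on_supp_mult: "bdd_on_supp g \<Longrightarrow> bdd_on_supp h \<Longrightarrow> bdd_on_supp (\<lambda>x. g x * h x)"
  unfolding bdd_on_supp_def abs_mult by (meson abs_ge_zero mult_mono order_trans)

lemma bdd_on_supp_sum:
  "finite J \<Longrightarrow> (\<And>j. j \<in> J \<Longrightarrow> bdd_on_supp (h j)) \<Longrightarrow> bdd_on_supp (\<lambda>x. \<Sum>j\<in>J. h j x)"
  by (induction J rule: finite_induct) (auto intro: bdd_on_supp_add bdd_on_supp_const)

lemma bdd_on_supp_sigma: "bdd_on_supp h \<Longrightarrow> bdd_on_supp (\<lambda>x. \<sigma> (h x))"
  unfolding bdd_on_supp_def using abs_sigma_le by blast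

lemma bdd_on_supp_sigma1: "bdd_on_supp h \<Longrightarrow> bdd_on_supp (\<lambda>x. \<sigma>1 (h x))"
  unfolding bdd_on_supp_def using abs_sigma1_le by blast

lemma bdd_on_supp_preact: "bdd_on_supp (preact d \<theta> k)"
  unfolding preact_def
  by (intro bdd_on_supp_sum bdd_on_supp_mult bdd_on_supp_const bdd_on_supp_coord) auto

lemma bdd_on_supp_net: "bdd_on_supp (net d m \<sigma> \<theta>)"
  unfolding net_eq_preact
  by (intro bdd_on_supp_sum bdd_on_supp_mult bdd_on_supp_const bdd_on_supp_sigma bdd_on_supp_preact) auto

lemma bdd_on_supp_linear_net: "bdd_on_supp (net d m (\<lambda>z. z) \<theta>)"
  unfolding net_eq_preact
  by (intro bdd_on_supp_sum bdd_on_supp_mult bdd_on_supp_const bdd_on_supp_preact) auto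

lemmas bdd_on_supp_intros = bdd_on_supp_const bdd_on_supp_coord bdd_on_supp_f bdd_on_supp_add
  bdd_on_supp_diff bdd_on_supp_mult bdd_on_supp_sum bdd_on_supp_sigma bdd_on_supp_sigma1
  bdd_on_supp_preact bdd_on_supp_net bdd_on_supp_linear_net

lemma gradR_weight:
  assumes k: "k < m" and i: "i \<in> {1..d}"
  shows "gradR d m \<sigma> \<rho> f \<theta> (k,i)
    = (\<integral>x. (net d m \<sigma> \<theta> x - f x) * \<theta> (k,0) * \<sigma>1 (preact d \<theta> k x) * x i * \<rho> x \<partial>xspace d)"
proof -
  define s0 where "s0 = \<theta> (k,i)"
  define g where "g s x = (net d m \<sigma> (\<theta>((k,i) := s)) x - f x)\<^sup>2 * \<rho> x" for s x
  define D where "D x = 2 * ((net d m \<sigma> \<theta> x - f x) * \<theta> (k,0) * \<sigma>1 (preact d \<theta> k x) * x i * \<rho> x)"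
    for x
  obtain H where H: "\<And>x. x \<in> space (xspace d) \<Longrightarrow> \<rho> x \<noteq> 0 \<Longrightarrow> \<bar>net d m \<sigma> \<theta> x - f x\<bar> \<le> H"
    using bdd_on_supp_diff[OF bdd_on_supp_net bdd_on_supp_f] unfolding bdd_on_supp_def by blast
  obtain Z where Z: "\<And>x. x \<in> space (xspace d) \<Longrightarrow> \<rho> x \<noteq> 0 \<Longrightarrow> \<bar>preact d \<theta> k x\<bar> \<le> Z"
    using bdd_on_supp_preact unfolding bdd_on_supp_def by blast
  define K where "K = (\<theta> (k,0))\<^sup>2 * ((1 + CL / 2 * Z\<^sup>2) * r + CL * (Z + r) / 2 * r\<^sup>2)\<^sup>2
    + 2 * H * \<bar>\<theta> (k,0)\<bar> * (CL * (Z + r) / 2 * r\<^sup>2)"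
  have g_int: "integrable (xspace d) (g s)" for s
    unfolding g_def power2_eq_square by (intro integrable_bdd_on_supp bdd_on_supp_intros) measurable
  have D_int: "integrable (xspace d) D"
    unfolding D_def using i
    by (intro integrable_mult_right integrable_bdd_on_supp bdd_on_supp_intros) measurable
  have remainder: "\<bar>g s x - g s0 x - (s - s0) * D x\<bar> \<le> K * (s - s0)\<^sup>2 * \<rho> x"
    if x: "x \<in> space (xspace d)" and s: "\<bar>s - s0\<bar> \<le> 1" for s x
  proof (cases "\<rho> x = 0")
    case False
    have "g s x - g s0 x - (s - s0) * D x = \<rho> x * ((net d m \<sigma> (\<theta>((k,i) := s)) x - f x)\<^sup>2
        - (net d m \<sigma> \<theta> x - f x)\<^sup>2
        - (s - s0) * (2 * (net d m \<sigma> \<theta> x - f x) * \<theta> (k,0) * \<sigma>1 (preact d \<theta> k x) * x i))"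
      unfolding g_def D_def s0_def by (simp add: algebra_simps)
    also have "\<bar>\<dots>\<bar> \<le> \<rho> x * (K * (s - s0)\<^sup>2)"
      unfolding abs_mult abs_of_nonneg[OF rho_nonneg[OF x]] K_def s0_def
      using rho_nonneg[OF x] s supp_radius(2)[OF x False i]
      by (intro mult_left_mono square_residual_fun_upd_remainder k i Z[OF x False] H[OF x False])
        (auto simp: s0_def)
    finally show ?thesis by (simp add: mult_ac)
  qed (simp add: g_def D_def)
  have risk_eq: "(\<lambda>s. risk d m \<sigma> \<rho> f (\<theta>((k,i) := s))) = (\<lambda>s. 1/2 * (\<integral>x. g s x \<partial>xspace d))"
    unfolding risk_def g_def ..
  have "((\<lambda>s. risk d m \<sigma> \<rho> f (\<theta>((k,i) := s)))
      has_real_derivative 1/2 * (\<integral>x. D x \<partial>xspace d)) (at s0)"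
    unfolding risk_eq using DERIV_integral_quadratic_remainder[OF integrable_rho g_int D_int remainder]
    by (rule DERIV_cmult)
  then have "gradR d m \<sigma> \<rho> f \<theta> (k,i) = 1/2 * (\<integral>x. D x \<partial>xspace d)"
    unfolding gradR_def s0_def[symmetric] by (rule DERIV_imp_deriv)
  then show ?thesis unfolding D_def by simp
qed

section \<open>Dynamics of the off-diagonal weights\<close>

lemma integral_linear_net_coord:
  assumes i: "i \<in> {1..d}"
  shows "(\<integral>x. net d m (\<lambda>z. z) \<theta> x * x i * \<rho> x \<partial>xspace d) = (\<Sum>k<m. \<theta> (k,0) * \<theta> (k,i))"
proof -
  define u where "u j = (\<Sum>k<m. \<theta> (k,0) * \<theta> (k,j))" for j
  have "(\<integral>x. net d m (\<lambda>z. z) \<theta> x * x i * \<rho> x \<partial>xspace d)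
      = (\<integral>x. (\<Sum>j=1..d. u j * (x j * x i * \<rho> x)) \<partial>xspace d)"
    unfolding net_def u_def sum_distrib_left sum_distrib_right
    by (subst sum.swap) (simp add: mult_ac)
  also have "\<dots> = (\<Sum>j=1..d. u j * (\<integral>x. x j * x i * \<rho> x \<partial>xspace d))"
    using i by (subst Bochner_Integration.integral_sum)
      (auto intro!: integrable_mult_right integrable_bdd_on_supp bdd_on_supp_intros)
  also have "\<dots> = (\<Sum>j=1..d. if j = i then u i else 0)"
    using rho_second[OF i] rho_cross[OF _ i] by (intro sum.cong) (auto simp: power2_eq_square)
  finally show ?thesis using i unfolding u_def by simp
qed

definition linearization_error :: "nat \<Rightarrow> (nat \<times> nat \<Rightarrow> real) \<Rightarrow> nat \<Rightarrow> real" where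
  "linearization_error m \<theta> i =
    (\<integral>x. (net d m \<sigma> \<theta> x - net d m (\<lambda>z. z) \<theta> x) * x i * \<rho> x \<partial>xspace d)"

definition gate_error :: "nat \<Rightarrow> (nat \<times> nat \<Rightarrow> real) \<Rightarrow> nat \<Rightarrow> real" where
  "gate_error m \<theta> i = (\<integral>x. (f x - net d m \<sigma> \<theta> x)
     * (\<Sum>k<m. \<theta> (k,0) * \<theta> (k,i) * (\<sigma>1 (preact d \<theta> k x) - 1)) * x i * \<rho> x \<partial>xspace d)"

lemma integral_residual_times_coord:
  assumes i: "i \<in> {2..d}"
  shows "(\<integral>x. (f x - net d m \<sigma> \<theta> x) * x i * \<rho> x \<partial>xspace d)
    = - (\<Sum>k<m. \<theta> (k,0) * \<theta> (k,i)) - linearization_error m \<theta> i"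
proof -
  have i1: "i \<in> {1..d}" using i by auto
  let ?N = "net d m \<sigma> \<theta>" and ?L = "net d m (\<lambda>z. z) \<theta>"
  have "integrable (xspace d) (\<lambda>x. f x * x i * \<rho> x)"
    "integrable (xspace d) (\<lambda>x. ?L x * x i * \<rho> x)"
    "integrable (xspace d) (\<lambda>x. (?N x - ?L x) * x i * \<rho> x)"
    using i1 by (intro integrable_bdd_on_supp bdd_on_supp_intros; measurable)+
  moreover have "(\<integral>x. (f x - ?N x) * x i * \<rho> x \<partial>xspace d)
      = (\<integral>x. f x * x i * \<rho> x - ?L x * x i * \<rho> x - (?N x - ?L x) * x i * \<rho> x \<partial>xspace d)"
    by (intro Bochner_Integration.integral_cong) (simp_all add: algebra_simps)
  ultimately show ?thesis
    using f_corr[OF i] integral_linear_net_coord[OF i1] unfolding linearization_error_def by simp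
qed

lemma sum_weight_times_flow:
  fixes m :: nat and \<theta> :: "nat \<times> nat \<Rightarrow> real"
  assumes i: "i \<in> {2..d}"
  defines "v \<equiv> \<Sum>k<m. \<theta> (k,0) * \<theta> (k,i)"
  shows "(\<Sum>k<m. 2 * \<theta> (k,i) * - gradR d m \<sigma> \<rho> f \<theta> (k,i))
    = 2 * (v * (- v - linearization_error m \<theta> i) + gate_error m \<theta> i)"
proof -
  have i1: "i \<in> {1..d}" using i by auto
  let ?N = "net d m \<sigma> \<theta>"
  define G where "G x = (\<Sum>k<m. \<theta> (k,0) * \<theta> (k,i) * (\<sigma>1 (preact d \<theta> k x) - 1))" for x
  have int_k: "integrable (xspace d)
      (\<lambda>x. - (2 * \<theta> (k,i)) * ((?N x - f x) * \<theta> (k,0) * \<sigma>1 (preact d \<theta> k x) * x i * \<rho> x))" for k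
    using i1 by (intro integrable_mult_right integrable_bdd_on_supp bdd_on_supp_intros) measurable
  have int: "integrable (xspace d) (\<lambda>x. (f x - ?N x) * x i * \<rho> x)"
    "integrable (xspace d) (\<lambda>x. (f x - ?N x) * G x * x i * \<rho> x)"
    unfolding G_def using i1 by (intro integrable_bdd_on_supp bdd_on_supp_intros; measurable)+
  have "(\<Sum>k<m. 2 * \<theta> (k,i) * - gradR d m \<sigma> \<rho> f \<theta> (k,i))
      = (\<Sum>k<m. \<integral>x. - (2 * \<theta> (k,i))
          * ((?N x - f x) * \<theta> (k,0) * \<sigma>1 (preact d \<theta> k x) * x i * \<rho> x) \<partial>xspace d)"
    using gradR_weight[OF _ i1] by simp
  also have "\<dots> = (\<integral>x. 2 * v * ((f x - ?N x) * x i * \<rho> x)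
      + 2 * ((f x - ?N x) * G x * x i * \<rho> x) \<partial>xspace d)"
    unfolding Bochner_Integration.integral_sum[OF int_k, symmetric] G_def v_def
    by (intro Bochner_Integration.integral_cong)
      (simp_all add: sum_distrib_left sum_distrib_right sum_subtractf algebra_simps)
  also have "\<dots> = 2 * v * (\<integral>x. (f x - ?N x) * x i * \<rho> x \<partial>xspace d) + 2 * gate_error m \<theta> i"
    using int unfolding gate_error_def G_def by simp
  also have "\<dots> = 2 * v * (- v - linearization_error m \<theta> i) + 2 * gate_error m \<theta> i"
    unfolding integral_residual_times_coord[OF i] v_def ..
  finally show ?thesis by (simp add: algebra_simps)
qed

lemma abs_preact_le:
  assumes x: "x \<in> space (xspace d)" "\<rho> x \<noteq> 0" and \<theta>: "\<And>j. j \<in> {1..d} \<Longrightarrow> \<bar>\<theta> (k,j)\<bar> \<le> Q"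
  shows "\<bar>preact d \<theta> k x\<bar> \<le> d * r * Q"
proof -
  have "\<bar>preact d \<theta> k x\<bar> \<le> (\<Sum>j=1..d. \<bar>\<theta> (k,j)\<bar> * \<bar>x j\<bar>)"
    unfolding preact_def abs_mult[symmetric] by (rule sum_abs)
  also have "\<dots> \<le> (\<Sum>j=1..d. Q * r)"
    using \<theta> supp_radius(2)[OF x] by (intro sum_mono mult_mono) force+
  finally show ?thesis by (simp add: mult_ac)
qed

definition lin_const :: real where
  "lin_const = r * CL * (d * r) ^ 3 / 6"

definition gate_const :: real where
  "gate_const = (B + d * r + CL * (d * r) ^ 3 / 6) * (CL * (d * r)\<^sup>2 / 2) * r"

lemma gate_const_nonneg: "0 \<le> gate_const"
  unfolding gate_const_def using f_bound(1) CL_nonneg supp_radius(1) by simp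

context
  fixes m :: nat and \<theta> :: "nat \<times> nat \<Rightarrow> real" and Q :: real
  assumes Q: "0 < Q" "Q \<le> 1" "1 \<le> m * Q\<^sup>2" and \<theta>: "\<And>k j. k < m \<Longrightarrow> j \<le> d \<Longrightarrow> \<bar>\<theta> (k,j)\<bar> \<le> Q"
begin

lemma abs_preact_le_radius:
  "x \<in> space (xspace d) \<Longrightarrow> \<rho> x \<noteq> 0 \<Longrightarrow> k < m \<Longrightarrow> \<bar>preact d \<theta> k x\<bar> \<le> d * r * Q"
  using abs_preact_le \<theta> by simp

lemma abs_net_sub_linear_net_le:
  assumes x: "x \<in> space (xspace d)" "\<rho> x \<noteq> 0"
  shows "\<bar>net d m \<sigma> \<theta> x - net d m (\<lambda>z. z) \<theta> x\<bar> \<le> m * Q * (CL / 6 * (d * r * Q) ^ 3)"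
proof -
  have "\<bar>net d m \<sigma> \<theta> x - net d m (\<lambda>z. z) \<theta> x\<bar>
      \<le> (\<Sum>k<m. \<bar>\<theta> (k,0)\<bar> * \<bar>\<sigma> (preact d \<theta> k x) - preact d \<theta> k x\<bar>)"
    unfolding net_eq_preact sum_subtractf[symmetric] right_diff_distrib[symmetric] abs_mult[symmetric]
    by (rule sum_abs)
  also have "\<dots> \<le> (\<Sum>k<m. Q * (CL / 6 * (d * r * Q) ^ 3))"
  proof (intro sum_mono mult_mono)
    fix k assume "k \<in> {..<m}"
    then have "\<bar>preact d \<theta> k x\<bar> ^ 3 \<le> (d * r * Q) ^ 3"
      using abs_preact_le_radius[OF x] by (intro power_mono) auto
    then show "\<bar>\<sigma> (preact d \<theta> k x) - preact d \<theta> k x\<bar> \<le> CL / 6 * (d * r * Q) ^ 3"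
      using sigma_cubic_remainder[of "preact d \<theta> k x"] CL_nonneg
      by (meson order_trans mult_left_mono divide_nonneg_pos zero_less_numeral)
  qed (use \<theta> Q in auto)
  finally show ?thesis by simp
qed

lemma abs_linearization_error_le:
  assumes i: "i \<in> {1..d}"
  shows "\<bar>linearization_error m \<theta> i\<bar> \<le> lin_const * m * Q ^ 4"
  unfolding linearization_error_def
proof (rule abs_integral_times_rho_le)
  fix x assume x: "x \<in> space (xspace d)" "\<rho> x \<noteq> 0"
  have "\<bar>(net d m \<sigma> \<theta> x - net d m (\<lambda>z. z) \<theta> x) * x i\<bar> \<le> (m * Q * (CL / 6 * (d * r * Q) ^ 3)) * r"
    unfolding abs_mult using abs_net_sub_linear_net_le[OF x] supp_radius(2)[OF x i]
    by (intro mult_mono') auto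
  also have "\<dots> = lin_const * m * Q ^ 4"
    unfolding lin_const_def by (simp add: power_mult_distrib power4_eq_xxxx power3_eq_cube)
  finally show "\<bar>(net d m \<sigma> \<theta> x - net d m (\<lambda>z. z) \<theta> x) * x i\<bar> \<le> lin_const * m * Q ^ 4" .
qed (use i in measurable)

lemma abs_f_sub_net_le:
  assumes x: "x \<in> space (xspace d)" "\<rho> x \<noteq> 0"
  shows "\<bar>f x - net d m \<sigma> \<theta> x\<bar> \<le> (B + d * r + CL * (d * r) ^ 3 / 6) * m * Q\<^sup>2"
proof -
  have "\<bar>net d m \<sigma> \<theta> x\<bar> \<le> (\<Sum>k<m. \<bar>\<theta> (k,0)\<bar> * \<bar>\<sigma> (preact d \<theta> k x)\<bar>)"
    unfolding net_eq_preact abs_mult[symmetric] by (rule sum_abs)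
  also have "\<dots> \<le> (\<Sum>k<m. Q * (Q * (d * r + CL * (d * r) ^ 3 / 6)))"
  proof (intro sum_mono mult_mono)
    fix k assume "k \<in> {..<m}"
    then have "\<bar>\<sigma> (preact d \<theta> k x)\<bar> \<le> d * r * Q + CL / 6 * (d * r * Q) ^ 3"
      using abs_sigma_le abs_preact_le_radius[OF x] by blast
    also have "\<dots> \<le> Q * (d * r + CL * (d * r) ^ 3 / 6)"
    proof -
      have "Q ^ 3 \<le> Q" using Q by (simp add: power_le_one power3_eq_cube mult_le_one)
      then have "CL / 6 * (d * r) ^ 3 * Q ^ 3 \<le> CL / 6 * (d * r) ^ 3 * Q"
        using CL_nonneg supp_radius(1) by (intro mult_left_mono) auto
      then show ?thesis by (simp add: power_mult_distrib algebra_simps)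
    qed
    finally show "\<bar>\<sigma> (preact d \<theta> k x)\<bar> \<le> Q * (d * r + CL * (d * r) ^ 3 / 6)" .
  qed (use \<theta> Q CL_nonneg supp_radius(1) in auto)
  finally have "\<bar>net d m \<sigma> \<theta> x\<bar> \<le> (d * r + CL * (d * r) ^ 3 / 6) * m * Q\<^sup>2"
    by (simp add: power2_eq_square mult_ac)
  moreover have "\<bar>f x\<bar> \<le> B * (m * Q\<^sup>2)"
    using f_bound(2)[OF x] mult_left_mono[OF Q(3) f_bound(1)] by simp
  ultimately show ?thesis by (simp add: algebra_simps abs_triangle_ineq4[THEN order_trans])
qed

lemma abs_gate_le:
  assumes x: "x \<in> space (xspace d)" "\<rho> x \<noteq> 0"
  shows "\<bar>\<Sum>k<m. \<theta> (k,0) * \<theta> (k,i) * (\<sigma>1 (preact d \<theta> k x) - 1)\<bar>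
    \<le> CL * (d * r)\<^sup>2 / 2 * Q ^ 3 * (\<Sum>k<m. \<bar>\<theta> (k,i)\<bar>)"
proof -
  have "\<bar>\<Sum>k<m. \<theta> (k,0) * \<theta> (k,i) * (\<sigma>1 (preact d \<theta> k x) - 1)\<bar>
      \<le> (\<Sum>k<m. \<bar>\<theta> (k,0)\<bar> * \<bar>\<theta> (k,i)\<bar> * \<bar>\<sigma>1 (preact d \<theta> k x) - 1\<bar>)"
    unfolding abs_mult[symmetric] by (rule sum_abs)
  also have "\<dots> \<le> (\<Sum>k<m. Q * \<bar>\<theta> (k,i)\<bar> * (CL / 2 * (d * r * Q)\<^sup>2))"
  proof (intro sum_mono mult_mono mult_right_mono)
    fix k assume "k \<in> {..<m}"
    then have "(preact d \<theta> k x)\<^sup>2 \<le> (d * r * Q)\<^sup>2"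
      using power_mono[OF abs_preact_le_radius[OF x], of k 2] by simp
    then show "\<bar>\<sigma>1 (preact d \<theta> k x) - 1\<bar> \<le> CL / 2 * (d * r * Q)\<^sup>2"
      using sigma1_quadratic_remainder[of "preact d \<theta> k x"] CL_nonneg
      by (meson order_trans mult_left_mono divide_nonneg_pos zero_less_numeral)
  qed (use \<theta> Q in auto)
  also have "\<dots> = CL * (d * r)\<^sup>2 / 2 * Q ^ 3 * (\<Sum>k<m. \<bar>\<theta> (k,i)\<bar>)"
    by (simp add: sum_distrib_left power_mult_distrib power2_eq_square power3_eq_cube algebra_simps)
  finally show ?thesis .
qed

lemma abs_gate_error_le:
  assumes i: "i \<in> {1..d}"
  shows "\<bar>gate_error m \<theta> i\<bar> \<le> gate_const * m * Q ^ 5 * (\<Sum>k<m. \<bar>\<theta> (k,i)\<bar>)"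
  unfolding gate_error_def
proof (rule abs_integral_times_rho_le)
  fix x assume x: "x \<in> space (xspace d)" "\<rho> x \<noteq> 0"
  have "\<bar>(f x - net d m \<sigma> \<theta> x) * (\<Sum>k<m. \<theta> (k,0) * \<theta> (k,i) * (\<sigma>1 (preact d \<theta> k x) - 1)) * x i\<bar>
      \<le> (B + d * r + CL * (d * r) ^ 3 / 6) * m * Q\<^sup>2
        * (CL * (d * r)\<^sup>2 / 2 * Q ^ 3 * (\<Sum>k<m. \<bar>\<theta> (k,i)\<bar>)) * r"
    unfolding abs_mult using abs_f_sub_net_le[OF x] abs_gate_le[OF x] supp_radius(2)[OF x i]
    by (intro mult_mono') auto
  also have "\<dots> = gate_const * m * Q ^ 5 * (\<Sum>k<m. \<bar>\<theta> (k,i)\<bar>)"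
    unfolding gate_const_def
    by (simp add: power2_eq_square power3_eq_cube numeral_eq_Suc algebra_simps)
  finally show "\<bar>(f x - net d m \<sigma> \<theta> x) * (\<Sum>k<m. \<theta> (k,0) * \<theta> (k,i) * (\<sigma>1 (preact d \<theta> k x) - 1)) * x i\<bar>
      \<le> gate_const * m * Q ^ 5 * (\<Sum>k<m. \<bar>\<theta> (k,i)\<bar>)" .
qed (use i in measurable)

lemma sum_weight_times_flow_le:
  assumes i: "i \<in> {2..d}"
  shows "(\<Sum>k<m. 2 * \<theta> (k,i) * - gradR d m \<sigma> \<rho> f \<theta> (k,i))
    \<le> (lin_const * m * Q ^ 4)\<^sup>2 / 2 + 2 * (gate_const * m * Q ^ 5 * (\<Sum>k<m. \<bar>\<theta> (k,i)\<bar>))"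
proof -
  have i1: "i \<in> {1..d}" using i by auto
  define v where "v = (\<Sum>k<m. \<theta> (k,0) * \<theta> (k,i))"
  define X where "X = linearization_error m \<theta> i"
  define Y where "Y = gate_error m \<theta> i"
  \<comment> \<open>The drift \<open>-2 v\<^sup>2\<close> of the linearized dynamics absorbs the cross term \<open>-2 v X\<close>.\<close>
  have "2 * (v * (- v - X) + Y) = X\<^sup>2 / 2 - (2 * v + X)\<^sup>2 / 2 + 2 * Y"
    by (simp add: power2_eq_square field_simps)
  also have "\<dots> \<le> X\<^sup>2 / 2 + 2 * \<bar>Y\<bar>"
    using zero_le_power2[of "2 * v + X"] abs_ge_self[of Y] by linarith
  also have "\<dots> \<le> (lin_const * m * Q ^ 4)\<^sup>2 / 2 + 2 * (gate_const * m * Q ^ 5 * (\<Sum>k<m. \<bar>\<theta> (k,i)\<bar>))"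
    using power_mono[OF abs_linearization_error_le[OF i1], of 2] abs_gate_error_le[OF i1]
    unfolding X_def Y_def by simp
  finally show ?thesis
    using sum_weight_times_flow[OF i, where m = m and \<theta> = \<theta>] unfolding v_def X_def Y_def by simp
qed

end

section \<open>Growth bound\<close>

lemma offdiag_norm_growth:
  fixes \<Phi> :: "real \<Rightarrow> nat \<times> nat \<Rightarrow> real" and Q t :: real
  assumes i: "i \<in> {2..d}"
    and ode: "\<And>j s. j \<in> param_idx d m \<Longrightarrow> 0 \<le> s \<Longrightarrow>
      ((\<lambda>s. \<Phi> s j) has_real_derivative - gradR d m \<sigma> \<rho> f (\<Phi> s) j) (at s within {0..})"
    and Q: "0 < Q" "Q \<le> 1" "1 \<le> m * Q\<^sup>2" and t: "0 < t"
    and bound: "\<And>s j. 0 \<le> s \<Longrightarrow> s < t \<Longrightarrow> j \<in> param_idx d m \<Longrightarrow> \<bar>\<Phi> s j\<bar> \<le> Q"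
  shows "sqrt (\<Sum>k<m. (\<Phi> t (k,i))\<^sup>2) \<le> sqrt (\<Sum>k<m. (\<Phi> 0 (k,i))\<^sup>2) + m * Q ^ 4
    + t * (lin_const\<^sup>2 / 4 * m * Q ^ 4 + gate_const * m * Q ^ 5 * sqrt m)"
proof -
  define S where "S s = (\<Sum>k<m. (\<Phi> s (k,i))\<^sup>2)" for s
  define S' where "S' s = (\<Sum>k<m. 2 * \<Phi> s (k,i) * - gradR d m \<sigma> \<rho> f (\<Phi> s) (k,i))" for s
  have idx: "(k,i) \<in> param_idx d m" if "k < m" for k using that i unfolding param_idx_def by auto
  have "0 < m" using Q(3) by (cases m) auto
  then have \<eta>: "0 < m * Q ^ 4" using Q by simp
  have "sqrt (S t) \<le> sqrt (S 0) + m * Q ^ 4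
      + t * (lin_const\<^sup>2 / 4 * (m * Q ^ 4) + gate_const * m * Q ^ 5 * sqrt m)"
  proof (rule sqrt_growth_bound[OF t \<eta>])
    have "continuous_on {0..t} (\<lambda>s. \<Phi> s (k,i))" if "k < m" for k
      by (rule DERIV_continuous_on, rule has_field_derivative_subset[OF ode[OF idx[OF that]]]) auto
    then show "continuous_on {0..t} S"
      unfolding S_def by (intro continuous_intros) auto
    show "(S has_real_derivative S' s) (at s)" if s: "0 < s" "s < t" for s
    proof -
      have "((\<lambda>s. \<Phi> s (k,i)) has_real_derivative - gradR d m \<sigma> \<rho> f (\<Phi> s) (k,i)) (at s within {0<..})"
        if "k < m" for k
        by (rule has_field_derivative_subset[OF ode[OF idx[OF that]]]) (use s in auto)
      then have "((\<lambda>s. \<Phi> s (k,i)) has_real_derivative - gradR d m \<sigma> \<rho> f (\<Phi> s) (k,i)) (at s)"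
        if "k < m" for k
        using at_within_open[of s "{0<..}"] s that by simp
      then show ?thesis
        unfolding S_def S'_def by (auto intro!: DERIV_sum derivative_eq_intros simp: mult_ac)
    qed
    show "S' s \<le> 2 * (m * Q ^ 4) * (lin_const\<^sup>2 / 4 * (m * Q ^ 4))
      + 2 * (gate_const * m * Q ^ 5 * sqrt m) * sqrt (S s)"
      if s: "0 < s" "s < t" for s
    proof -
      have "\<bar>\<Phi> s (k,j)\<bar> \<le> Q" if "k < m" "j \<le> d" for k j
        using bound[of s "(k,j)"] s that unfolding param_idx_def by auto
      then have "S' s
          \<le> (lin_const * m * Q ^ 4)\<^sup>2 / 2 + 2 * (gate_const * m * Q ^ 5 * (\<Sum>k<m. \<bar>\<Phi> s (k,i)\<bar>))"
        unfolding S'_def using sum_weight_times_flow_le[OF Q _ i] by blast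
      also have "\<dots> \<le> (lin_const * m * Q ^ 4)\<^sup>2 / 2 + 2 * (gate_const * m * Q ^ 5 * (sqrt m * sqrt (S s)))"
        unfolding S_def using sum_abs_le_sqrt_card_mult gate_const_nonneg Q
        by (simp add: mult_left_mono)
      finally show ?thesis by (simp add: power2_eq_square algebra_simps)
    qed
  qed (use gate_const_nonneg Q in \<open>auto simp: S_def intro: sum_nonneg\<close>)
  then show ?thesis unfolding S_def by (simp add: mult_ac)
qed

end

lemma not_before_first_time:
  assumes "ereal t \<le> first_time P t0" "t0 \<le> s" "s < t"
  shows "\<not> P s"
proof
  assume "P s"
  then have "first_time P t0 \<le> ereal s"
    unfolding first_time_def using assms(2) by (intro Inf_lower) auto
  from order_trans[OF assms(1) this] assms(3) show False by simp
qed

lemma abs_le_qmax: "j \<in> param_idx d m \<Longrightarrow> \<bar>\<theta> j\<bar> \<le> qmax d m \<theta>"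
  unfolding qmax_def param_idx_def by (intro Max_ge) auto

lemma time_window_bounds:
  fixes m :: nat and \<alpha> \<delta>' t :: real
  assumes m: "3 \<le> m" and \<alpha>: "1/2 < \<alpha>" "\<alpha> \<le> 3/2" and \<delta>': "0 < \<delta>'" "\<delta>' < 1/4"
    and t: "(2*\<alpha> - 1) / 4 * ln m \<le> t" "t \<le> (2*\<alpha> - 1) / (2 - \<delta>') * ln m"
  shows "0 < (2*\<alpha> - 1) * \<delta>'" "(2*\<alpha> - 1) * \<delta>' < 1/2" "1 \<le> ln m" "0 < t" "t \<le> 2 * ln m"
proof -
  have "(2*\<alpha> - 1) * \<delta>' \<le> 2 * \<delta>'" using \<alpha> \<delta>' by (intro mult_right_mono) auto
  then show "0 < (2*\<alpha> - 1) * \<delta>'" "(2*\<alpha> - 1) * \<delta>' < 1/2" using \<alpha> \<delta>' by (simp, linarith)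
  have "exp 1 \<le> real m" using exp_le m by linarith
  then show ln_m: "1 \<le> ln m" using m by (simp add: ln_ge_iff)
  have "0 < (2*\<alpha> - 1) / 4 * ln m" using \<alpha> ln_m by simp
  then show "0 < t" using t(1) by linarith
  have "(2*\<alpha> - 1) / (2 - \<delta>') \<le> 2" using \<alpha> \<delta>' by (simp add: divide_le_eq)
  then show "t \<le> 2 * ln m" using t(2) ln_m mult_right_mono[of _ 2 "ln m"] by fastforce
qed

lemma sqrt_mult_powr_minus:
  fixes x \<alpha> :: real
  assumes "0 < x"
  shows "sqrt x * x powr (-\<alpha>) = 1 / x powr ((2*\<alpha> - 1) / 2)"
proof -
  have "sqrt x * x powr (-\<alpha>) = x powr (1/2) * x powr (-\<alpha>)"
    using assms by (simp add: powr_half_sqrt)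
  also have "\<dots> = x powr (1/2 + -\<alpha>)" by (rule powr_add[symmetric])
  also have "1/2 + -\<alpha> = -((2*\<alpha> - 1) / 2)" by (simp add: field_simps)
  finally show ?thesis by (simp add: powr_minus_divide)
qed

context isotropic_data
begin

lemma offdiag_norm_bound_before_exit:
  fixes \<Phi> :: "real \<Rightarrow> nat \<times> nat \<Rightarrow> real" and \<alpha> \<delta>' c t :: real
  assumes m: "3 \<le> m" and \<alpha>: "1/2 < \<alpha>" "\<alpha> \<le> 3/2" and \<delta>': "0 < \<delta>'" "\<delta>' < 1/4"
    and i: "i \<in> {2..d}"
    and ode: "\<And>j s. j \<in> param_idx d m \<Longrightarrow> 0 \<le> s \<Longrightarrow>
      ((\<lambda>s. \<Phi> s j) has_real_derivative - gradR d m \<sigma> \<rho> f (\<Phi> s) j) (at s within {0..})"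
    and init: "(\<Sum>k<m. (\<Phi> 0 (k,i))\<^sup>2) \<le> c * (m * (m powr (-\<alpha>))\<^sup>2)" and c: "0 \<le> c"
    and t: "(2*\<alpha> - 1) / 4 * ln m \<le> t" "t \<le> (2*\<alpha> - 1) / (2 - \<delta>') * ln m"
    and exit: "ereal t \<le> first_time (\<lambda>s. qmax d m (\<Phi> s) \<ge> m powr (-(1/2 - (2*\<alpha> - 1) * \<delta>'))) 0"
  shows "sqrt (\<Sum>k<m. (\<Phi> t (k,i))\<^sup>2) \<le> (sqrt c + 1 + 2 * (lin_const\<^sup>2 / 4 + gate_const))
    * max (1 / m powr ((2*\<alpha> - 1)/2)) (ln m / m powr (1 - 5 * ((2*\<alpha> - 1) * \<delta>')))"
proof -
  define e where "e = (2*\<alpha> - 1) * \<delta>'"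
  define Q where "Q = m powr (-(1/2 - e))"
  define E where "E = m powr (5 * e - 1)"
  define K where "K = lin_const\<^sup>2 / 4 + gate_const"
  define a where "a = 1 / m powr ((2*\<alpha> - 1)/2)"
  define b where "b = ln m / m powr (1 - 5 * e)"
  obtain e: "0 < e" "e < 1/2" and ln_m: "1 \<le> ln m" and t0: "0 < t" and t_le: "t \<le> 2 * ln m"
    using time_window_bounds[OF m \<alpha> \<delta>' t] unfolding e_def by blast
  have Q: "0 < Q" "Q \<le> 1" "1 \<le> m * Q\<^sup>2" "m * Q ^ 4 \<le> E" "m * Q ^ 5 * sqrt m = E"
    using weight_scale_powers[of m e] powr_mono[of "-(1/2 - e)" 0 m] m e
    unfolding Q_def E_def by auto
  have bound: "\<bar>\<Phi> s j\<bar> \<le> Q" if "0 \<le> s" "s < t" "j \<in> param_idx d m" for s j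
    using abs_le_qmax[OF that(3), of "\<Phi> s"] not_before_first_time[OF exit that(1,2)]
    unfolding Q_def e_def by linarith
  have K: "0 \<le> K" unfolding K_def using gate_const_nonneg by simp
  have E: "0 \<le> E" unfolding E_def by simp
  have "lin_const\<^sup>2 / 4 * m * Q ^ 4 \<le> lin_const\<^sup>2 / 4 * E"
    using mult_left_mono[OF Q(4), of "lin_const\<^sup>2 / 4"] by (simp add: mult.assoc)
  moreover have "gate_const * m * Q ^ 5 * sqrt m = gate_const * E"
    using Q(5) by (simp add: mult.assoc)
  ultimately have rate: "lin_const\<^sup>2 / 4 * m * Q ^ 4 + gate_const * m * Q ^ 5 * sqrt m \<le> K * E"
    unfolding K_def distrib_right by linarith
  have time: "t * (lin_const\<^sup>2 / 4 * m * Q ^ 4 + gate_const * m * Q ^ 5 * sqrt m)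
      \<le> 2 * ln m * (K * E)"
    using mult_left_mono[OF rate less_imp_le[OF t0]] mult_right_mono[OF t_le, of "K * E"] K E
    by (simp add: mult.assoc)
  have "sqrt (\<Sum>k<m. (\<Phi> 0 (k,i))\<^sup>2) \<le> sqrt c * (sqrt m * m powr (-\<alpha>))"
    using real_sqrt_le_mono[OF init] by (simp add: real_sqrt_mult)
  moreover have "sqrt m * m powr (-\<alpha>) = a"
    unfolding a_def using m by (intro sqrt_mult_powr_minus) simp
  ultimately have start: "sqrt (\<Sum>k<m. (\<Phi> 0 (k,i))\<^sup>2) \<le> sqrt c * a" by simp
  have "ln m * E = b"
    using powr_minus[of "real m" "1 - 5 * e"] unfolding b_def E_def by (simp add: divide_inverse)
  then have "E \<le> b" "2 * ln m * (K * E) = 2 * K * b"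
    using E ln_m mult_right_mono[OF ln_m E] by (auto simp: mult_ac)
  then have "sqrt (\<Sum>k<m. (\<Phi> t (k,i))\<^sup>2) \<le> sqrt c * a + b + 2 * K * b"
    using offdiag_norm_growth[OF i ode Q(1-3) t0 bound] Q(4) time start by linarith
  also have "\<dots> = sqrt c * a + (1 + 2 * K) * b" by (simp add: algebra_simps)
  also have "\<dots> \<le> (sqrt c + (1 + 2 * K)) * max a b"
    using c K by (intro add_mult_le_add_mult_max) auto
  finally show ?thesis unfolding K_def a_def b_def e_def by (simp add: add.assoc)
qed

text \<open>The bound holds up to any further stopping time \<open>Td\<close>.\<close>

lemma offdiag_norm_bound_whp:
  fixes \<Phi> :: "nat \<Rightarrow> (nat \<times> nat \<Rightarrow> real) \<Rightarrow> real \<Rightarrow> nat \<times> nat \<Rightarrow> real" and \<alpha> \<delta>' \<delta> :: real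
    and Td :: "nat \<Rightarrow> (nat \<times> nat \<Rightarrow> real) \<Rightarrow> ereal"
  assumes d: "2 \<le> d" and \<alpha>: "1/2 < \<alpha>" "\<alpha> \<le> 3/2" and \<delta>': "0 < \<delta>'" "\<delta>' < 1/4" and \<delta>: "0 < \<delta>"
    and flow_init: "\<And>m \<theta>0 j. 2 \<le> m \<Longrightarrow> j \<in> param_idx d m \<Longrightarrow> \<Phi> m \<theta>0 0 j = \<theta>0 j"
    and flow_ode: "\<And>m \<theta>0 j t. 2 \<le> m \<Longrightarrow> j \<in> param_idx d m \<Longrightarrow> 0 \<le> t \<Longrightarrow>
      ((\<lambda>s. \<Phi> m \<theta>0 s j) has_real_derivative - gradR d m \<sigma> \<rho> f (\<Phi> m \<theta>0 t) j) (at t within {0..})"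
  shows "\<exists>M::nat. \<exists>C. \<forall>m\<ge>M. \<exists>A\<in>sets (init_measure d m \<alpha>). 1 - \<delta> \<le> measure (init_measure d m \<alpha>) A \<and>
    (\<forall>\<theta>0\<in>A. \<forall>t. \<forall>i\<in>{2..d}. (2*\<alpha> - 1) / 4 * ln m \<le> t \<and> ereal t \<le> Td m \<theta>0
      \<and> ereal t \<le> first_time (\<lambda>s. m powr (-(1/2 - (2*\<alpha> - 1) * \<delta>')) \<le> qmax d m (\<Phi> m \<theta>0 s)) 0
      \<and> t \<le> (2*\<alpha> - 1) / (2 - \<delta>') * ln m \<longrightarrow>
      sqrt (\<Sum>k<m. (\<Phi> m \<theta>0 t (k,i))\<^sup>2)
        \<le> C * max (1 / m powr ((2*\<alpha> - 1)/2)) (ln m / m powr (1 - 5 * ((2*\<alpha> - 1) * \<delta>'))))"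
proof -
  define C where "C = sqrt (real (d - 1) / \<delta>) + 1 + 2 * (lin_const\<^sup>2 / 4 + gate_const)"
  have "\<exists>A\<in>sets (init_measure d m \<alpha>). 1 - \<delta> \<le> measure (init_measure d m \<alpha>) A \<and>
    (\<forall>\<theta>0\<in>A. \<forall>t. \<forall>i\<in>{2..d}. (2*\<alpha> - 1) / 4 * ln m \<le> t \<and> ereal t \<le> Td m \<theta>0
      \<and> ereal t \<le> first_time (\<lambda>s. m powr (-(1/2 - (2*\<alpha> - 1) * \<delta>')) \<le> qmax d m (\<Phi> m \<theta>0 s)) 0
      \<and> t \<le> (2*\<alpha> - 1) / (2 - \<delta>') * ln m \<longrightarrow>
      sqrt (\<Sum>k<m. (\<Phi> m \<theta>0 t (k,i))\<^sup>2)
        \<le> C * max (1 / m powr ((2*\<alpha> - 1)/2)) (ln m / m powr (1 - 5 * ((2*\<alpha> - 1) * \<delta>'))))"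
    if m: "3 \<le> m" for m
  proof -
  obtain A where A: "A \<in> sets (init_measure d m \<alpha>)" "1 - \<delta> \<le> measure (init_measure d m \<alpha>) A"
    "\<And>\<theta> i. \<theta> \<in> A \<Longrightarrow> i \<in> {2..d} \<Longrightarrow>
      (\<Sum>k<m. (\<theta> (k,i))\<^sup>2) \<le> real (d - 1) / \<delta> * (m * (m powr (-\<alpha>))\<^sup>2)"
    using init_offdiag_mass_bound[of m d \<delta> \<alpha>] m d \<delta> by auto
  show ?thesis
  proof (intro bexI[OF _ A(1)] conjI A(2) ballI allI impI)
    fix \<theta>0 t i assume "\<theta>0 \<in> A" "i \<in> {2..d}"
      and t: "(2*\<alpha> - 1) / 4 * ln m \<le> t \<and> ereal t \<le> Td m \<theta>0
        \<and> ereal t \<le> first_time (\<lambda>s. m powr (-(1/2 - (2*\<alpha> - 1) * \<delta>')) \<le> qmax d m (\<Phi> m \<theta>0 s)) 0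
        \<and> t \<le> (2*\<alpha> - 1) / (2 - \<delta>') * ln m"
    moreover have "(\<Sum>k<m. (\<Phi> m \<theta>0 0 (k,i))\<^sup>2) = (\<Sum>k<m. (\<theta>0 (k,i))\<^sup>2)"
      using flow_init m \<open>i \<in> {2..d}\<close> by (intro sum.cong) (auto simp: param_idx_def)
    ultimately show "sqrt (\<Sum>k<m. (\<Phi> m \<theta>0 t (k,i))\<^sup>2)
        \<le> C * max (1 / m powr ((2*\<alpha> - 1)/2)) (ln m / m powr (1 - 5 * ((2*\<alpha> - 1) * \<delta>')))"
      using A(3) m \<delta> unfolding C_def
      by (intro offdiag_norm_bound_before_exit[OF m \<alpha> \<delta>']) (auto intro: flow_ode)
  qed
  qed
  then show ?thesis by blast
qed

end

theorem proposition3: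
  fixes d :: nat and \<rho> f :: "(nat \<Rightarrow> real) \<Rightarrow> real"
    and \<sigma> \<sigma>1 \<sigma>2 \<sigma>3 :: "real \<Rightarrow> real" and CL :: real and \<alpha> :: real
    and \<Phi> :: "nat \<Rightarrow> (nat \<times> nat \<Rightarrow> real) \<Rightarrow> real \<Rightarrow> (nat \<times> nat \<Rightarrow> real)"
  assumes d2: "d \<ge> 2"
    and rho_meas: "\<rho> \<in> borel_measurable (xspace d)"
    and rho_nonneg: "\<And>x. x \<in> space (xspace d) \<Longrightarrow> \<rho> x \<ge> 0"
    and rho_prob: "(\<integral>x. \<rho> x \<partial>xspace d) = 1"
    and rho_cpt: "\<exists>r. \<forall>x\<in>space (xspace d). (\<exists>i\<in>{1..d}. r < \<bar>x i\<bar>) \<longrightarrow> \<rho> x = 0"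
    and rho_second: "\<And>i. i \<in> {1..d} \<Longrightarrow> (\<integral>x. (x i)^2 * \<rho> x \<partial>xspace d) = 1"
    and rho_cross: "\<And>i j. i \<in> {1..d} \<Longrightarrow> j \<in> {1..d} \<Longrightarrow> i \<noteq> j \<Longrightarrow>
                      (\<integral>x. x i * x j * \<rho> x \<partial>xspace d) = 0"
    and f_meas: "f \<in> borel_measurable (xspace d)"
    and f_bdd: "\<exists>B. \<forall>x\<in>space (xspace d). \<rho> x \<noteq> 0 \<longrightarrow> \<bar>f x\<bar> \<le> B"
    and f_corr1: "(\<integral>x. f x * x 1 * \<rho> x \<partial>xspace d) = 1"
    and f_corr: "\<And>i. i \<in> {2..d} \<Longrightarrow> (\<integral>x. f x * x i * \<rho> x \<partial>xspace d) = 0"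
    and sig1: "\<And>z. (\<sigma> has_real_derivative \<sigma>1 z) (at z)"
    and sig2: "\<And>z. (\<sigma>1 has_real_derivative \<sigma>2 z) (at z)"
    and sig3: "\<And>z. (\<sigma>2 has_real_derivative \<sigma>3 z) (at z)"
    and sig0: "\<sigma> 0 = 0" "\<sigma>1 0 = 1" "\<sigma>2 0 = 0"
    and sig3_bdd: "\<And>z. \<bar>\<sigma>3 z\<bar> \<le> CL"
    and flow_init: "\<And>m \<theta>0 j. m \<ge> 2 \<Longrightarrow> j \<in> param_idx d m \<Longrightarrow> \<Phi> m \<theta>0 0 j = \<theta>0 j"
    and flow_ode: "\<And>m \<theta>0 j t. m \<ge> 2 \<Longrightarrow> j \<in> param_idx d m \<Longrightarrow> t \<ge> 0 \<Longrightarrow>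
        ((\<lambda>s. \<Phi> m \<theta>0 s j) has_real_derivative (- gradR d m \<sigma> \<rho> f (\<Phi> m \<theta>0 t) j)) (at t within {0..})"
    and alpha: "1/2 < \<alpha>" "\<alpha> \<le> 3/2"
  shows "\<exists>\<beta>0>0. \<exists>\<delta>0>0. \<forall>\<beta> \<delta>'. 0 < \<beta> \<and> \<beta> < \<beta>0 \<and> 0 < \<delta>' \<and> \<delta>' < \<delta>0 \<longrightarrow>
     (\<forall>\<delta>. 0 < \<delta> \<and> \<delta> < 1 \<longrightarrow>
      (\<exists>M::nat. \<exists>C::real. \<forall>m\<ge>M.
        (let Tp = (2*\<alpha> - 1) / 4 * ln (real m);
             \<alpha>2 = (2*\<alpha> - 1) * \<delta>';
             Tmax = (2*\<alpha> - 1) / (2 - \<delta>') * ln (real m)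
         in \<exists>A \<in> sets (init_measure d m \<alpha>). measure (init_measure d m \<alpha>) A \<ge> 1 - \<delta> \<and>
           (\<forall>\<theta>0\<in>A.
             (let Td = first_time (\<lambda>s. Kfun m (\<Phi> m \<theta>0 s) \<le> 0 \<or> K'fun m (\<Phi> m \<theta>0 s) \<le> 0
                                       \<or> 1 - Kfun m (\<Phi> m \<theta>0 s) \<le> \<beta>) Tp;
                  T2 = first_time (\<lambda>s. qmax d m (\<Phi> m \<theta>0 s) \<ge> real m powr (-(1/2 - \<alpha>2))) 0
              in \<forall>t. \<forall>i\<in>{2..d}. Tp \<le> t \<and> ereal t \<le> Td \<and> ereal t \<le> T2 \<and> t \<le> Tmax \<longrightarrow>
                  sqrt (\<Sum>k<m. (\<Phi> m \<theta>0 t (k,i))^2)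
                    \<le> C * max (1 / real m powr ((2*\<alpha> - 1)/2)) (ln (real m) / real m powr (1 - 5*\<alpha>2)))))))"
proof -
  obtain r where r: "\<forall>x\<in>space (xspace d). (\<exists>i\<in>{1..d}. r < \<bar>x i\<bar>) \<longrightarrow> \<rho> x = 0"
    using rho_cpt by blast
  obtain B where B: "\<forall>x\<in>space (xspace d). \<rho> x \<noteq> 0 \<longrightarrow> \<bar>f x\<bar> \<le> B"
    using f_bdd by blast
  interpret isotropic_data \<sigma> \<sigma>1 \<sigma>2 \<sigma>3 CL d \<rho> f "max 1 r" "max 0 B"
    using sig1 sig2 sig3 sig0 sig3_bdd rho_meas rho_nonneg rho_prob rho_second rho_cross
      f_meas f_corr r B
    by unfold_locales (force simp: le_max_iff_disj not_less)+
  \<comment> \<open>Any \<open>\<beta>0\<close> will do and \<open>\<delta>0 = 1/4\<close> keeps \<open>\<alpha>2 < 1/2\<close>.\<close>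
  show ?thesis
    unfolding Let_def
    by (rule exI[of _ "1::real"], rule conjI, simp, rule exI[of _ "1/4::real"], rule conjI, simp,
        intro allI impI, rule offdiag_norm_bound_whp[OF d2 alpha _ _ _ flow_init flow_ode]) auto
qed

end
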